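(* Let $(M^{2m},F,g)$ be a para-Kähler-Norden manifold, let $V$ be a unit parallel vector field on $M$, let $\alpha:M\to(0,\infty)$ be smooth with $(FV)(\alpha)=0$, and let $g^{\alpha}(X,Y)=\alpha\big(g(X,Y)+g(X,FV)g(Y,FV)\big)$. If $\sigma$ and $\widetilde{\sigma}$ denote the scalar curvatures of $g$ and $g^{\alpha}$, then $$\widetilde{\sigma}=\frac{1}{\alpha}\sigma-\frac{2m-1}{\alpha^{2}}\Delta(\alpha)-\frac{(2m-1)(m-3)}{2\alpha^{3}}\|\mathrm{grad}\,\alpha\|^{2}.$$
   Context: A para-Kähler-Norden manifold $(M^{2m},F,g)$: $M$ is a $2m$-dimensional smooth manifold, $F$ is a $(1,1)$-tensor field with $F^2=I$ whose eigenbundles for the eigenvalues $+1,-1$ have the same rank, $g$ is a Riemannian metric with $g(FX,Y)=g(X,FY)$, and $\nabla F=0$ for the Levi-Civita connection $\nabla$ of $g$. $V$ unit parallel means $g(V,V)=1$, $\nabla V=0$. $\mathrm{grad}\,\alpha$ is the $g$-gradient, $\|\cdot\|$ the $g$-norm, $\Delta(\alpha)=\sum_i g(\nabla_{e_i}\mathrm{grad}\,\alpha,e_i)$ over a $g$-orthonormal frame. Scalar curvature is the trace of the Ricci curvature with respect to the respective metric. *)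

theory Defs
  imports "HOL-Analysis.Analysis"
begin

text \<open>Local-coordinate Riemannian geometry on an open set U of real^'n
  (a single chart). Tensor fields are given by their components.
  Matrix entries: G x $ i $ j = g_ij, F x $ i $ j = F^i_j, V x $ i = V^i.\<close>

definition pd :: "'n::finite \<Rightarrow> (real^'n \<Rightarrow> real) \<Rightarrow> real^'n \<Rightarrow> real" where
  "pd i f x = deriv (\<lambda>t. f (x + t *\<^sub>R axis i 1)) 0"

fun iterpd :: "'n::finite list \<Rightarrow> (real^'n \<Rightarrow> real) \<Rightarrow> real^'n \<Rightarrow> real" where
  "iterpd [] f = f"
| "iterpd (i # is) f = pd i (iterpd is f)"

definition smooth_on :: "(real^'n::finite) set \<Rightarrow> (real^'n \<Rightarrow> real) \<Rightarrow> bool" where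
  "smooth_on U f \<longleftrightarrow> (\<forall>is. iterpd is f differentiable_on U)"

definition ginv :: "(real^'n::finite \<Rightarrow> real^'n^'n) \<Rightarrow> real^'n \<Rightarrow> real^'n^'n" where
  "ginv G x = matrix_inv (G x)"

text \<open>Christoffel symbols of the Levi-Civita connection: christ G x k i j = Gamma^k_ij.\<close>
definition christ :: "(real^'n::finite \<Rightarrow> real^'n^'n) \<Rightarrow> real^'n \<Rightarrow> 'n \<Rightarrow> 'n \<Rightarrow> 'n \<Rightarrow> real" where
  "christ G x k i j = (1/2) * (\<Sum>l\<in>UNIV. ginv G x $ k $ l *
      (pd i (\<lambda>y. G y $ j $ l) x + pd j (\<lambda>y. G y $ i $ l) x - pd l (\<lambda>y. G y $ i $ j) x))"

text \<open>Riemann tensor R^r_{s mu nu}, Ricci tensor Ric_{s nu} = R^r_{s r nu},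
  scalar curvature g^{s nu} Ric_{s nu}.\<close>
definition riem :: "(real^'n::finite \<Rightarrow> real^'n^'n) \<Rightarrow> real^'n \<Rightarrow> 'n \<Rightarrow> 'n \<Rightarrow> 'n \<Rightarrow> 'n \<Rightarrow> real" where
  "riem G x r s \<mu> \<nu> = pd \<mu> (\<lambda>y. christ G y r \<nu> s) x - pd \<nu> (\<lambda>y. christ G y r \<mu> s) x
     + (\<Sum>l\<in>UNIV. christ G x r \<mu> l * christ G x l \<nu> s - christ G x r \<nu> l * christ G x l \<mu> s)"

definition ricci :: "(real^'n::finite \<Rightarrow> real^'n^'n) \<Rightarrow> real^'n \<Rightarrow> 'n \<Rightarrow> 'n \<Rightarrow> real" where
  "ricci G x s \<nu> = (\<Sum>r\<in>UNIV. riem G x r s r \<nu>)"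

definition scal :: "(real^'n::finite \<Rightarrow> real^'n^'n) \<Rightarrow> real^'n \<Rightarrow> real" where
  "scal G x = (\<Sum>s\<in>UNIV. \<Sum>\<nu>\<in>UNIV. ginv G x $ s $ \<nu> * ricci G x s \<nu>)"

definition gradc :: "(real^'n::finite \<Rightarrow> real^'n^'n) \<Rightarrow> (real^'n \<Rightarrow> real) \<Rightarrow> real^'n \<Rightarrow> 'n \<Rightarrow> real" where
  "gradc G f x k = (\<Sum>j\<in>UNIV. ginv G x $ k $ j * pd j f x)"

definition grad_normsq :: "(real^'n::finite \<Rightarrow> real^'n^'n) \<Rightarrow> (real^'n \<Rightarrow> real) \<Rightarrow> real^'n \<Rightarrow> real" where
  "grad_normsq G f x = (\<Sum>i\<in>UNIV. \<Sum>j\<in>UNIV. G x $ i $ j * gradc G f x i * gradc G f x j)"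

definition laplacian :: "(real^'n::finite \<Rightarrow> real^'n^'n) \<Rightarrow> (real^'n \<Rightarrow> real) \<Rightarrow> real^'n \<Rightarrow> real" where
  "laplacian G f x = (\<Sum>i\<in>UNIV. pd i (\<lambda>y. gradc G f y i) x
      + (\<Sum>k\<in>UNIV. christ G x i i k * gradc G f x k))"

definition riemannian_metric_on :: "(real^'n::finite) set \<Rightarrow> (real^'n \<Rightarrow> real^'n^'n) \<Rightarrow> bool" where
  "riemannian_metric_on U G \<longleftrightarrow>
     (\<forall>a b. smooth_on U (\<lambda>y. G y $ a $ b)) \<and>
     (\<forall>x\<in>U. transpose (G x) = G x \<and> (\<forall>v. v \<noteq> 0 \<longrightarrow> v \<bullet> (G x *v v) > 0))"

definition nablaF :: "(real^'n::finite \<Rightarrow> real^'n^'n) \<Rightarrow> (real^'n \<Rightarrow> real^'n^'n) \<Rightarrow> real^'n \<Rightarrow> 'n \<Rightarrow> 'n \<Rightarrow> 'n \<Rightarrow> real" where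
  "nablaF G F x k i j = pd k (\<lambda>y. F y $ i $ j) x
     + (\<Sum>l\<in>UNIV. christ G x i k l * F x $ l $ j - christ G x l k j * F x $ i $ l)"

definition para_kaehler_norden :: "(real^'n::finite) set \<Rightarrow> (real^'n \<Rightarrow> real^'n^'n) \<Rightarrow> (real^'n \<Rightarrow> real^'n^'n) \<Rightarrow> bool" where
  "para_kaehler_norden U F G \<longleftrightarrow>
     riemannian_metric_on U G \<and>
     (\<forall>i j. smooth_on U (\<lambda>y. F y $ i $ j)) \<and>
     (\<forall>x\<in>U. F x ** F x = mat 1 \<and>
        dim {v. F x *v v = v} = dim {v. F x *v v = - v} \<and>
        transpose (F x) ** G x = G x ** F x \<and>
        (\<forall>k i j. nablaF G F x k i j = 0))"

definition unit_parallel :: "(real^'n::finite) set \<Rightarrow> (real^'n \<Rightarrow> real^'n^'n) \<Rightarrow> (real^'n \<Rightarrow> real^'n) \<Rightarrow> bool" where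
  "unit_parallel U G V \<longleftrightarrow>
     (\<forall>i. smooth_on U (\<lambda>y. V y $ i)) \<and>
     (\<forall>x\<in>U. V x \<bullet> (G x *v V x) = 1 \<and>
        (\<forall>k i. pd k (\<lambda>y. V y $ i) x + (\<Sum>l\<in>UNIV. christ G x i k l * V x $ l) = 0))"

definition deformed_metric :: "(real^'n::finite \<Rightarrow> real^'n^'n) \<Rightarrow> (real^'n \<Rightarrow> real^'n^'n) \<Rightarrow> (real^'n \<Rightarrow> real^'n) \<Rightarrow> (real^'n \<Rightarrow> real) \<Rightarrow> real^'n \<Rightarrow> real^'n^'n" where
  "deformed_metric G F V \<alpha> x = \<alpha> x *\<^sub>R (G x + (\<chi> i j. (G x *v (F x *v V x)) $ i * (G x *v (F x *v V x)) $ j))"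

end

theory Submission
  imports Defs
begin

text \<open>Let \<open>\<xi> = FV\<close>. Since \<open>F\<close> and \<open>V\<close> are parallel, so is \<open>\<xi>\<close>, and
  \<open>g(\<xi>,\<xi>) = g(V, F\<^sup>2 V) = 1\<close>. Hence \<open>h = g + g(\<xi>,-) \<otimes> g(\<xi>,-)\<close> is parallel for the
  Levi-Civita connection of \<open>g\<close>, which is therefore also the Levi-Civita connection of \<open>h\<close>,
  and \<open>g\<^sup>\<alpha> = \<alpha> h\<close> is a conformal change of \<open>h\<close>. Its Christoffel symbols are those of \<open>g\<close>
  plus \<open>(\<delta>\<^sup>k\<^sub>i \<partial>\<^sub>j\<alpha> + \<delta>\<^sup>k\<^sub>j \<partial>\<^sub>i\<alpha> - h\<^sub>i\<^sub>j b\<^sup>k) / (2\<alpha>)\<close>, where \<open>b = h\<inverse> d\<alpha>\<close> is also the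
  \<open>g\<close>-gradient of \<open>\<alpha>\<close> because \<open>\<xi>(\<alpha>) = 0\<close>. Contracting the Ricci tensor of \<open>g\<^sup>\<alpha>\<close> with
  \<open>(g\<^sup>\<alpha>)\<inverse> = (g\<inverse> - \<xi> \<otimes> \<xi> / 2) / \<alpha>\<close> gives the familiar formula for a conformal change in
  dimension \<open>n = 2m\<close>; the \<open>\<xi>\<xi>\<close>-corrections vanish because the curvature annihilates the
  parallel field \<open>\<xi>\<close> (so \<open>Ric(\<xi>,\<xi>) = 0\<close>) and because \<open>\<nabla>\<^sup>2\<alpha>(\<xi>,\<xi>) = \<xi>(\<xi>(\<alpha>)) = 0\<close>.\<close>

section \<open>Coordinate partial derivatives\<close>

lemma DERIV_along_line:
  fixes f :: "real^'n::finite \<Rightarrow> real"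
  assumes "(f has_derivative f') (at (w + s *\<^sub>R v))"
  shows "DERIV (\<lambda>t. f (w + t *\<^sub>R v)) s :> f' v"
proof -
  have lin: "linear f'" using assms has_derivative_linear by blast
  have "((\<lambda>t. w + t *\<^sub>R v) has_derivative (\<lambda>t. t *\<^sub>R v)) (at s)"
    by (auto intro!: derivative_eq_intros)
  then have "((\<lambda>t. f (w + t *\<^sub>R v)) has_derivative (\<lambda>t. f' (t *\<^sub>R v))) (at s)"
    using assms by (rule has_derivative_compose)
  moreover have "(\<lambda>t. f' (t *\<^sub>R v)) = (\<lambda>t. f' v * t)"
    using linear_scale[OF lin] by (auto simp: mult.commute)
  ultimately show ?thesis by (simp add: has_field_derivative_def)
qed

lemma pd_eq_derivative:
  fixes f :: "real^'n::finite \<Rightarrow> real"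
  assumes "(f has_derivative f') (at x)"
  shows "pd i f x = f' (axis i 1)"
  using DERIV_along_line[of f f' x 0 "axis i 1"] assms unfolding pd_def
  by (simp add: DERIV_imp_deriv)

lemma DERIV_along_axis:
  fixes f :: "real^'n::finite \<Rightarrow> real"
  assumes "f differentiable (at (w + s *\<^sub>R axis i 1))"
  shows "DERIV (\<lambda>t. f (w + t *\<^sub>R axis i 1)) s :> pd i f (w + s *\<^sub>R axis i 1)"
proof -
  obtain f' where "(f has_derivative f') (at (w + s *\<^sub>R axis i 1))"
    using assms differentiable_def by blast
  then show ?thesis using DERIV_along_line pd_eq_derivative by metis
qed

lemma pd_const [simp]: "pd i (\<lambda>y. c) x = 0"
  by (simp add: pd_def)

lemma pd_add:
  fixes f g :: "real^'n::finite \<Rightarrow> real"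
  assumes "f differentiable (at x)" "g differentiable (at x)"
  shows "pd i (\<lambda>y. f y + g y) x = pd i f x + pd i g x"
proof -
  obtain f' g' where d: "(f has_derivative f') (at x)" "(g has_derivative g') (at x)"
    using assms unfolding differentiable_def by blast
  then show ?thesis
    using pd_eq_derivative[OF has_derivative_add[OF d]] pd_eq_derivative[OF d(1)]
      pd_eq_derivative[OF d(2)]
    by simp
qed

lemma pd_diff:
  fixes f g :: "real^'n::finite \<Rightarrow> real"
  assumes "f differentiable (at x)" "g differentiable (at x)"
  shows "pd i (\<lambda>y. f y - g y) x = pd i f x - pd i g x"
proof -
  obtain f' g' where d: "(f has_derivative f') (at x)" "(g has_derivative g') (at x)"
    using assms unfolding differentiable_def by blast
  then show ?thesis
    using pd_eq_derivative[OF has_derivative_diff[OF d]] pd_eq_derivative[OF d(1)]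
      pd_eq_derivative[OF d(2)]
    by simp
qed

lemma pd_mult:
  fixes f g :: "real^'n::finite \<Rightarrow> real"
  assumes "f differentiable (at x)" "g differentiable (at x)"
  shows "pd i (\<lambda>y. f y * g y) x = f x * pd i g x + pd i f x * g x"
proof -
  obtain f' g' where d: "(f has_derivative f') (at x)" "(g has_derivative g') (at x)"
    using assms unfolding differentiable_def by blast
  then show ?thesis
    using pd_eq_derivative[OF has_derivative_mult[OF d]] pd_eq_derivative[OF d(1)]
      pd_eq_derivative[OF d(2)]
    by simp
qed

lemma pd_divide:
  fixes f g :: "real^'n::finite \<Rightarrow> real"
  assumes "f differentiable (at x)" "g differentiable (at x)" "g x \<noteq> 0"
  shows "pd i (\<lambda>y. f y / g y) x = (pd i f x * g x - f x * pd i g x) / (g x * g x)"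
proof -
  obtain f' g' where d: "(f has_derivative f') (at x)" "(g has_derivative g') (at x)"
    using assms unfolding differentiable_def by blast
  then show ?thesis
    using pd_eq_derivative[OF has_derivative_divide'[OF d assms(3)]] pd_eq_derivative[OF d(1)]
      pd_eq_derivative[OF d(2)]
    by simp
qed

lemma pd_cmult:
  fixes f :: "real^'n::finite \<Rightarrow> real"
  assumes "f differentiable (at x)"
  shows "pd i (\<lambda>y. c * f y) x = c * pd i f x"
  using pd_mult[of "\<lambda>y. c" x f i] assms by simp

lemma pd_minus:
  fixes f :: "real^'n::finite \<Rightarrow> real"
  assumes "f differentiable (at x)"
  shows "pd i (\<lambda>y. - f y) x = - pd i f x"
  using pd_cmult[OF assms, of i "-1"] by simp

lemma pd_sum:
  fixes f :: "'a \<Rightarrow> real^'n::finite \<Rightarrow> real"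
  assumes "finite S" "\<And>k. k \<in> S \<Longrightarrow> f k differentiable (at x)"
  shows "pd i (\<lambda>y. \<Sum>k\<in>S. f k y) x = (\<Sum>k\<in>S. pd i (f k) x)"
  using assms
proof (induction S rule: finite_induct)
  case (insert a S)
  have "(\<lambda>y. \<Sum>k\<in>S. f k y) differentiable (at x)"
    using insert by (intro differentiable_sum) auto
  then show ?case using insert pd_add[of "f a" x _ i] by simp
qed simp

lemma pd_cong_open:
  fixes f g :: "real^'n::finite \<Rightarrow> real"
  assumes "open U" "x \<in> U" "\<And>y. y \<in> U \<Longrightarrow> f y = g y"
  shows "pd i f x = pd i g x"
proof -
  obtain e where e: "e > 0" "ball x e \<subseteq> U" using assms open_contains_ball by blast
  have "eventually (\<lambda>t. f (x + t *\<^sub>R axis i 1) = g (x + t *\<^sub>R axis i 1)) (nhds (0::real))"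
    unfolding eventually_nhds_metric
  proof (intro exI[of _ e] conjI allI impI)
    fix t :: real assume "dist t 0 < e"
    then have "x + t *\<^sub>R axis i 1 \<in> ball x e" by (simp add: dist_norm)
    then show "f (x + t *\<^sub>R axis i 1) = g (x + t *\<^sub>R axis i 1)" using e assms(3) by blast
  qed (use e in auto)
  then show ?thesis unfolding pd_def by (rule deriv_cong_ev) simp
qed

lemma differentiable_cong_open:
  fixes f g :: "real^'n::finite \<Rightarrow> real"
  assumes "f differentiable (at x)" "open U" "x \<in> U" "\<And>y. y \<in> U \<Longrightarrow> f y = g y"
  shows "g differentiable (at x)"
  using assms has_derivative_transform_within_open unfolding differentiable_def by metis

lemma smooth_on_differentiable:
  assumes "smooth_on U f" "open U" "x \<in> U"
  shows "f differentiable (at x)"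
  using assms iterpd.simps(1)[of f] differentiable_on_eq_differentiable_at
  unfolding smooth_on_def by metis

lemma smooth_on_pd_differentiable:
  assumes "smooth_on U f" "open U" "x \<in> U"
  shows "pd i f differentiable (at x)"
proof -
  have "iterpd [i] f differentiable_on U" using assms unfolding smooth_on_def by blast
  then show ?thesis using assms differentiable_on_eq_differentiable_at by auto
qed

section \<open>Symmetry of second partial derivatives\<close>

definition second_difference :: "(real^'n::finite \<Rightarrow> real) \<Rightarrow> real^'n \<Rightarrow> 'n \<Rightarrow> 'n \<Rightarrow> real \<Rightarrow> real"
  where "second_difference f x i j t =
    f (x + t *\<^sub>R axis i 1 + t *\<^sub>R axis j 1) - f (x + t *\<^sub>R axis i 1) - f (x + t *\<^sub>R axis j 1) + f x"

lemma second_difference_commute: "second_difference f x i j t = second_difference f x j i t"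
  unfolding second_difference_def by (simp add: ac_simps diff_right_commute)

lemma second_difference_mvt:
  fixes f :: "real^'n::finite \<Rightarrow> real"
  assumes "\<And>y. y \<in> cball x (2 * \<bar>t\<bar>) \<Longrightarrow> f differentiable (at y)"
  obtains \<xi> where "\<bar>\<xi>\<bar> \<le> \<bar>t\<bar>" "second_difference f x i j t
    = t * (pd i f (x + t *\<^sub>R axis j 1 + \<xi> *\<^sub>R axis i 1) - pd i f (x + \<xi> *\<^sub>R axis i 1))"
proof -
  define \<phi> where "\<phi> s = f (x + t *\<^sub>R axis j 1 + s *\<^sub>R axis i 1) - f (x + s *\<^sub>R axis i 1)" for s
  define \<phi>' where
    "\<phi>' s = pd i f (x + t *\<^sub>R axis j 1 + s *\<^sub>R axis i 1) - pd i f (x + s *\<^sub>R axis i 1)" for s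
  have "DERIV \<phi> s :> \<phi>' s" if "\<bar>s\<bar> \<le> \<bar>t\<bar>" for s
  proof -
    have "norm (t *\<^sub>R axis j 1 + s *\<^sub>R axis i (1::real)) \<le> \<bar>t\<bar> + \<bar>s\<bar>"
      by (rule order_trans[OF norm_triangle_ineq]) simp
    moreover have "x + v \<in> cball x r \<longleftrightarrow> norm v \<le> r" for v r by (simp add: dist_norm)
    ultimately have "x + t *\<^sub>R axis j 1 + s *\<^sub>R axis i 1 \<in> cball x (2 * \<bar>t\<bar>)"
      "x + s *\<^sub>R axis i 1 \<in> cball x (2 * \<bar>t\<bar>)"
      using that by (auto simp only: add.assoc) auto
    then show ?thesis
      unfolding \<phi>_def \<phi>'_def by (intro DERIV_diff DERIV_along_axis assms)
  qed
  then have "\<exists>\<xi>. \<bar>\<xi>\<bar> \<le> \<bar>t\<bar> \<and> \<phi> t - \<phi> 0 = t * \<phi>' \<xi>"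
  proof (cases t "0::real" rule: linorder_cases)
    case less
    then obtain z where "t < z" "z < 0" "\<phi> 0 - \<phi> t = (0 - t) * \<phi>' z"
      using MVT2[of t 0 \<phi> \<phi>'] \<open>\<And>s. \<bar>s\<bar> \<le> \<bar>t\<bar> \<Longrightarrow> DERIV \<phi> s :> \<phi>' s\<close> by force
    then show ?thesis by (intro exI[of _ z]) (auto simp: algebra_simps)
  next
    case greater
    then obtain z where "0 < z" "z < t" "\<phi> t - \<phi> 0 = (t - 0) * \<phi>' z"
      using MVT2[of 0 t \<phi> \<phi>'] \<open>\<And>s. \<bar>s\<bar> \<le> \<bar>t\<bar> \<Longrightarrow> DERIV \<phi> s :> \<phi>' s\<close> by force
    then show ?thesis by (intro exI[of _ z]) auto
  qed simp
  moreover have "second_difference f x i j t = \<phi> t - \<phi> 0"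
    unfolding second_difference_def \<phi>_def by (simp add: algebra_simps)
  ultimately show ?thesis using that unfolding \<phi>'_def by metis
qed

lemma second_difference_quotient_estimate:
  fixes f :: "real^'n::finite \<Rightarrow> real"
  assumes df: "\<And>y. y \<in> cball x (2 * \<bar>t\<bar>) \<Longrightarrow> f differentiable (at y)" and "t \<noteq> 0"
    and lin: "linear p'" and "e \<ge> 0"
    and approx: "\<And>y. norm (y - x) \<le> 2 * \<bar>t\<bar> \<Longrightarrow>
                   \<bar>pd i f y - pd i f x - p' (y - x)\<bar> \<le> e * norm (y - x)"
  shows "\<bar>second_difference f x i j t / t^2 - p' (axis j 1)\<bar> \<le> 3 * e"
proof -
  define p where "p = pd i f"
  obtain \<xi> where \<xi>: "\<bar>\<xi>\<bar> \<le> \<bar>t\<bar>"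
    "second_difference f x i j t
       = t * (p (x + t *\<^sub>R axis j 1 + \<xi> *\<^sub>R axis i 1) - p (x + \<xi> *\<^sub>R axis i 1))"
    using second_difference_mvt[OF df] unfolding p_def by blast
  define y1 where "y1 = x + t *\<^sub>R axis j 1 + \<xi> *\<^sub>R axis i 1"
  define y2 where "y2 = x + \<xi> *\<^sub>R axis i 1"
  have "norm (t *\<^sub>R axis j 1 + \<xi> *\<^sub>R axis i (1::real)) \<le> \<bar>t\<bar> + \<bar>\<xi>\<bar>"
    by (rule order_trans[OF norm_triangle_ineq]) simp
  then have n1: "norm (y1 - x) \<le> 2 * \<bar>t\<bar>" using \<xi>(1) by (simp add: y1_def add.assoc)
  have n2: "norm (y2 - x) \<le> \<bar>t\<bar>" using \<xi>(1) by (simp add: y2_def)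
  have "p' (y1 - x) - p' (y2 - x) = p' (y1 - x - (y2 - x))"
    by (simp only: linear_diff[OF lin])
  also have "y1 - x - (y2 - x) = t *\<^sub>R axis j 1" by (simp add: y1_def y2_def)
  finally have "p' (y1 - x) - p' (y2 - x) = t * p' (axis j 1)"
    by (simp add: linear_scale[OF lin])
  moreover have "\<bar>p y1 - p x - p' (y1 - x)\<bar> \<le> e * (2 * \<bar>t\<bar>)"
    using approx[OF n1] mult_left_mono[OF n1 \<open>e \<ge> 0\<close>] unfolding p_def by linarith
  moreover have "\<bar>p y2 - p x - p' (y2 - x)\<bar> \<le> e * \<bar>t\<bar>"
    using approx[of y2] n2 mult_left_mono[OF n2 \<open>e \<ge> 0\<close>] unfolding p_def by linarith
  ultimately have "\<bar>p y1 - p y2 - t * p' (axis j 1)\<bar> \<le> 3 * e * \<bar>t\<bar>"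
    unfolding abs_le_iff by linarith
  then have "\<bar>p y1 - p y2 - t * p' (axis j 1)\<bar> / \<bar>t\<bar> \<le> 3 * e"
    using \<open>t \<noteq> 0\<close> by (simp add: pos_divide_le_eq)
  moreover have "(t * (p y1 - p y2)) / t^2 - p' (axis j 1) = (p y1 - p y2 - t * p' (axis j 1)) / t"
    using \<open>t \<noteq> 0\<close> by (simp add: power2_eq_square field_simps)
  ultimately show ?thesis
    using \<xi>(2) unfolding y1_def[symmetric] y2_def[symmetric] by (simp add: abs_divide)
qed

lemma second_difference_quotient_tendsto:
  fixes f :: "real^'n::finite \<Rightarrow> real"
  assumes U: "open U" "x \<in> U" and df: "\<And>y. y \<in> U \<Longrightarrow> f differentiable (at y)"
    and "pd i f differentiable (at x)"
  shows "((\<lambda>t. second_difference f x i j t / t^2) \<longlongrightarrow> pd j (pd i f) x) (at 0)"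
proof -
  obtain p' where dp: "(pd i f has_derivative p') (at x)"
    using assms(4) unfolding differentiable_def by blast
  obtain r where r: "r > 0" "cball x r \<subseteq> U" using U open_contains_cball by blast
  have "\<exists>s>0. \<forall>t. t \<noteq> 0 \<and> norm (t - 0) < s \<longrightarrow>
      norm (second_difference f x i j t / t^2 - p' (axis j 1)) < e" if "e > 0" for e
  proof -
    obtain d where d: "d > 0" "\<And>y. norm (y - x) < d \<Longrightarrow>
        \<bar>pd i f y - pd i f x - p' (y - x)\<bar> \<le> e/4 * norm (y - x)"
      using dp[unfolded has_derivative_at_alt] \<open>e > 0\<close>
      by (metis real_norm_def zero_less_divide_iff zero_less_numeral)
    show ?thesis
    proof (intro exI[of _ "min d r / 2"] conjI allI impI)
      fix t :: real assume t: "t \<noteq> 0 \<and> norm (t - 0) < min d r / 2"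
      have "cball x (2 * \<bar>t\<bar>) \<subseteq> U"
        by (rule order_trans[OF subset_cball r(2)]) (use t in simp)
      moreover have "\<bar>pd i f y - pd i f x - p' (y - x)\<bar> \<le> e/4 * norm (y - x)"
        if "norm (y - x) \<le> 2 * \<bar>t\<bar>" for y
        using that t by (intro d(2)) simp
      ultimately have "\<bar>second_difference f x i j t / t^2 - p' (axis j 1)\<bar> \<le> 3 * (e/4)"
        using t \<open>e > 0\<close> has_derivative_linear[OF dp] df
        by (intro second_difference_quotient_estimate) auto
      then show "norm (second_difference f x i j t / t^2 - p' (axis j 1)) < e"
        using \<open>e > 0\<close> by simp
    qed (use d r in auto)
  qed
  then show ?thesis unfolding pd_eq_derivative[OF dp] by (rule LIM_I)
qed

lemma pd_commute:
  fixes f :: "real^'n::finite \<Rightarrow> real"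
  assumes "open U" "x \<in> U" "\<And>y. y \<in> U \<Longrightarrow> f differentiable (at y)"
    and "pd i f differentiable (at x)" "pd j f differentiable (at x)"
  shows "pd j (pd i f) x = pd i (pd j f) x"
  using second_difference_quotient_tendsto[OF assms(1-4), of j]
    second_difference_quotient_tendsto[OF assms(1-3,5), of i]
  unfolding second_difference_commute[of f x j i]
  by (rule tendsto_unique[OF trivial_limit_at])

definition kdelta :: "'n \<Rightarrow> 'n \<Rightarrow> real" where
  "kdelta i j = (if i = j then 1 else 0)"

lemma kdelta_sym: "kdelta i j = kdelta j i"
  by (auto simp: kdelta_def)

lemma kdelta_same [simp]: "kdelta i i = 1"
  by (simp add: kdelta_def)

lemma kdelta_mult_eq_if:
  "kdelta r s * x = (if r = s then x else 0)" "x * kdelta r s = (if r = s then x else 0)"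
  by (simp_all add: kdelta_def)

lemma sum_kdelta [simp]:
  fixes s :: "'n::finite"
  shows "(\<Sum>r\<in>UNIV. kdelta r s * f r) = f s" "(\<Sum>r\<in>UNIV. kdelta s r * f r) = f s"
    "(\<Sum>r\<in>UNIV. f r * kdelta r s) = f s" "(\<Sum>r\<in>UNIV. f r * kdelta s r) = f s"
    "(\<Sum>r\<in>UNIV. kdelta r s) = 1" "(\<Sum>r\<in>UNIV. kdelta s r) = 1"
  by (simp_all add: kdelta_mult_eq_if) (simp_all add: kdelta_def)

lemma if_zero_mult_distrib:
  "(if P then x else 0) * (y::real) = (if P then x * y else 0)"
  "(y::real) * (if P then x else 0) = (if P then y * x else 0)"
  by simp_all

lemma sum_if_zero: "(\<Sum>v\<in>A. if P then f v else (0::real)) = (if P then sum f A else 0)"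
  by simp

lemmas kdelta_expand = kdelta_mult_eq_if if_zero_mult_distrib sum_if_zero

lemma matrix_inv:
  fixes A :: "real^'n::finite^'n"
  assumes "invertible A"
  shows "A ** matrix_inv A = mat 1" "matrix_inv A ** A = mat 1"
  using someI_ex[OF assms[unfolded invertible_def]] unfolding matrix_inv_def by auto

lemma matrix_inv_entries:
  fixes A :: "real^'n::finite^'n"
  assumes "invertible A"
  shows "(\<Sum>l\<in>UNIV. matrix_inv A $ i $ l * A $ l $ j) = kdelta i j"
    "(\<Sum>l\<in>UNIV. A $ i $ l * matrix_inv A $ l $ j) = kdelta i j"
  using arg_cong[OF matrix_inv(2)[OF assms], of "\<lambda>M. M $ i $ j"]
    arg_cong[OF matrix_inv(1)[OF assms], of "\<lambda>M. M $ i $ j"]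
  by (simp_all add: matrix_matrix_mult_def mat_def kdelta_def)

lemma matrix_inv_eqI:
  fixes A B :: "real^'n::finite^'n"
  assumes "A ** B = mat 1"
  shows "matrix_inv A = B"
proof -
  have inv: "invertible A" using assms invertible_right_inverse by blast
  have "matrix_inv A = matrix_inv A ** (A ** B)" using assms by simp
  also have "\<dots> = (matrix_inv A ** A) ** B" by (simp add: matrix_mul_assoc)
  finally show ?thesis using matrix_inv(2)[OF inv] by simp
qed

lemma pos_def_invertible:
  fixes A :: "real^'n::finite^'n"
  assumes "\<forall>v. v \<noteq> 0 \<longrightarrow> v \<bullet> (A *v v) > 0"
  shows "invertible A"
proof -
  have "\<forall>v. A *v v = 0 \<longrightarrow> v = 0" using assms by (metis inner_zero_right less_irrefl)
  then obtain B where "B ** A = mat 1" using matrix_left_invertible_ker by blast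
  then show ?thesis using invertible_left_inverse by blast
qed

lemma transpose_matrix_inv_symmetric:
  fixes A :: "real^'n::finite^'n"
  assumes "transpose A = A" "invertible A"
  shows "transpose (matrix_inv A) = matrix_inv A"
proof -
  have "transpose (matrix_inv A ** A) = mat 1" using matrix_inv(2)[OF assms(2)]
    by (simp add: transpose_mat)
  then have "A ** transpose (matrix_inv A) = mat 1" using assms(1)
    by (simp add: matrix_transpose_mul)
  then show ?thesis using matrix_inv_eqI by metis
qed

lemma matrix_inv_cramer:
  fixes A :: "real^'n::finite^'n"
  assumes "invertible A"
  shows "matrix_inv A $ k $ l = det (\<chi> i j. if j = k then axis l 1 $ i else A $ i $ j) / det A"
proof -
  let ?x = "\<chi> k. matrix_inv A $ k $ l"
  have "(\<Sum>k\<in>UNIV. A $ i $ k * matrix_inv A $ k $ l) = (if i = l then 1 else 0)" for i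
    using arg_cong[OF matrix_inv(1)[OF assms], of "\<lambda>M. M $ i $ l"]
    by (simp add: matrix_matrix_mult_def mat_def)
  then have "A *v ?x = axis l 1" unfolding vec_eq_iff matrix_vector_mult_def axis_def by simp
  moreover have d: "det A \<noteq> 0" using assms invertible_det_nz by blast
  ultimately have "?x = (\<chi> k. det (\<chi> i j. if j = k then axis l 1 $ i else A $ i $ j) / det A)"
    using cramer[OF d, THEN iffD1] by blast
  then have "?x $ k = (\<chi> k. det (\<chi> i j. if j = k then axis l 1 $ i else A $ i $ j) / det A) $ k"
    by simp
  then show ?thesis by simp
qed

lemma differentiable_det:
  fixes M :: "real^'m::finite \<Rightarrow> real^'n::finite^'n"
  assumes "\<And>i j. (\<lambda>y. M y $ i $ j) differentiable (at x)"
  shows "(\<lambda>y. det (M y)) differentiable (at x)"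
proof -
  have "(\<lambda>y. \<Prod>i\<in>S. M y $ i $ p i) differentiable (at x)" if "finite S" for S and p :: "'n \<Rightarrow> 'n"
    using that by (induction S rule: finite_induct) (auto intro!: differentiable_mult assms)
  then show ?thesis unfolding det_def
    by (intro differentiable_sum differentiable_mult differentiable_const) auto
qed

lemma differentiable_matrix_inv_entry:
  fixes G :: "real^'n::finite \<Rightarrow> real^'n^'n"
  assumes "open U" "x \<in> U" "\<forall>y\<in>U. invertible (G y)"
    and "\<And>i j. (\<lambda>y. G y $ i $ j) differentiable (at x)"
  shows "(\<lambda>y. matrix_inv (G y) $ k $ l) differentiable (at x)"
proof (rule differentiable_cong_open[OF _ assms(1,2)])
  show "(\<lambda>y. det (\<chi> i j. if j = k then axis l 1 $ i else G y $ i $ j)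
      / det (G y)) differentiable (at x)"
  proof (intro differentiable_divide differentiable_det)
    show "(\<lambda>y. (\<chi> i j. if j = k then axis l 1 $ i else G y $ i $ j) $ i $ j) differentiable (at x)"
      for i j using assms(4) by (cases "j = k") simp_all
    show "det (G x) \<noteq> 0" using assms(2,3) invertible_det_nz by blast
  qed (rule assms(4))
  show "det (\<chi> i j. if j = k then axis l 1 $ i else G y $ i $ j) / det (G y)
      = matrix_inv (G y) $ k $ l"
    if "y \<in> U" for y using that assms(3) matrix_inv_cramer[of "G y" k l] by simp
qed

lemma pd_matrix_inv:
  fixes G :: "real^'n::finite \<Rightarrow> real^'n^'n"
  assumes U: "open U" "x \<in> U" and inv: "\<forall>y\<in>U. invertible (G y)"
    and dG: "\<And>i j. (\<lambda>y. G y $ i $ j) differentiable (at x)"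
  shows "pd k (\<lambda>y. matrix_inv (G y) $ i $ m) x
    = - (\<Sum>j\<in>UNIV. \<Sum>l\<in>UNIV.
           matrix_inv (G x) $ i $ l * pd k (\<lambda>y. G y $ l $ j) x * matrix_inv (G x) $ j $ m)"
proof -
  define P where "P l = pd k (\<lambda>y. matrix_inv (G y) $ i $ l) x" for l
  define g where "g = matrix_inv (G x)"
  have dinv: "(\<lambda>y. matrix_inv (G y) $ i $ l) differentiable (at x)" for l
    using differentiable_matrix_inv_entry[OF U inv dG] .
  have "(\<Sum>l\<in>UNIV. P l * G x $ l $ j) = - (\<Sum>l\<in>UNIV. g $ i $ l * pd k (\<lambda>y. G y $ l $ j) x)" for j
  proof -
    have "pd k (\<lambda>y. \<Sum>l\<in>UNIV. matrix_inv (G y) $ i $ l * G y $ l $ j) x = pd k (\<lambda>y. kdelta i j) x"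
      using inv by (intro pd_cong_open[OF U]) (simp add: matrix_inv_entries)
    then have "(\<Sum>l\<in>UNIV. g $ i $ l * pd k (\<lambda>y. G y $ l $ j) x + P l * G x $ l $ j) = 0"
      by (simp add: pd_sum pd_mult dinv dG g_def P_def)
    then show ?thesis by (simp add: sum.distrib eq_neg_iff_add_eq_0 add.commute)
  qed
  moreover have "P m = (\<Sum>j\<in>UNIV. (\<Sum>l\<in>UNIV. P l * G x $ l $ j) * g $ j $ m)"
  proof -
    have "(\<Sum>j\<in>UNIV. (\<Sum>l\<in>UNIV. P l * G x $ l $ j) * g $ j $ m)
        = (\<Sum>j\<in>UNIV. \<Sum>l\<in>UNIV. P l * (G x $ l $ j * g $ j $ m))"
      by (simp add: sum_distrib_right mult.assoc)
    also have "\<dots> = (\<Sum>l\<in>UNIV. P l * (\<Sum>j\<in>UNIV. G x $ l $ j * g $ j $ m))"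
      by (subst sum.swap) (simp add: sum_distrib_left)
    finally show ?thesis using inv U(2) by (simp add: g_def matrix_inv_entries)
  qed
  ultimately show ?thesis unfolding P_def g_def by (simp add: sum_negf sum_distrib_right)
qed

lemma symmetric_entries:
  fixes M :: "real^'n::finite^'n"
  assumes "transpose M = M"
  shows "M $ i $ j = M $ j $ i"
  using arg_cong[OF assms, of "\<lambda>A. A $ j $ i"] by (simp add: transpose_def)

section \<open>Christoffel symbols\<close>

lemma christ_sym:
  fixes M :: "real^'n::finite \<Rightarrow> real^'n^'n"
  assumes "open U" "y \<in> U" "\<forall>z\<in>U. transpose (M z) = M z"
  shows "christ M y k i j = christ M y k j i"
proof -
  have "pd l (\<lambda>z. M z $ i $ j) y = pd l (\<lambda>z. M z $ j $ i) y" for l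
    using assms by (intro pd_cong_open[OF assms(1,2)] symmetric_entries) blast
  then show ?thesis unfolding christ_def by (simp add: add.commute)
qed

lemma pd_metric_christ:
  fixes M :: "real^'n::finite \<Rightarrow> real^'n^'n"
  assumes U: "open U" "y \<in> U" and sym: "\<forall>z\<in>U. transpose (M z) = M z" and inv: "invertible (M y)"
  shows "pd k (\<lambda>z. M z $ i $ j) y
    = (\<Sum>l\<in>UNIV. christ M y l k i * M y $ l $ j + christ M y l k j * M y $ i $ l)"
proof -
  have Msym: "M z $ i $ j = M z $ j $ i" if "z \<in> U" for z i j
    using sym that by (simp add: symmetric_entries)
  have dsym: "pd k (\<lambda>z. M z $ i $ j) y = pd k (\<lambda>z. M z $ j $ i) y" for k i j
    using Msym by (intro pd_cong_open[OF U])
  have "(\<Sum>l\<in>UNIV. ginv M y $ l $ m * M y $ l $ j) = kdelta j m" for m j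
    using matrix_inv_entries(2)[OF inv, of j m] Msym[OF U(2)] unfolding ginv_def
    by (simp add: mult.commute)
  then have lower: "(\<Sum>l\<in>UNIV. christ M y l k i * M y $ l $ j)
      = (pd k (\<lambda>z. M z $ i $ j) y + pd i (\<lambda>z. M z $ k $ j) y - pd j (\<lambda>z. M z $ k $ i) y) / 2"
    for k i j
  proof -
    define S where "S m = pd k (\<lambda>z. M z $ i $ m) y + pd i (\<lambda>z. M z $ k $ m) y
      - pd m (\<lambda>z. M z $ k $ i) y" for m
    have "(\<Sum>l\<in>UNIV. christ M y l k i * M y $ l $ j)
        = (\<Sum>l\<in>UNIV. \<Sum>m\<in>UNIV. S m * (ginv M y $ l $ m * M y $ l $ j)) / 2"
      unfolding christ_def S_def[symmetric]
        by (simp add: sum_distrib_left sum_distrib_right mult_ac)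
    also have "\<dots> = (\<Sum>m\<in>UNIV. S m * (\<Sum>l\<in>UNIV. ginv M y $ l $ m * M y $ l $ j)) / 2"
      by (subst sum.swap) (simp add: sum_distrib_left)
    finally show ?thesis by (simp add: \<open>\<And>m j. _ = kdelta j m\<close> kdelta_sym[of j] S_def)
  qed
  have "(\<Sum>l\<in>UNIV. christ M y l k j * M y $ i $ l) = (\<Sum>l\<in>UNIV. christ M y l k j * M y $ l $ i)"
    using Msym[OF U(2)] by (metis (no_types))
  then show ?thesis
    using dsym[of k j i] dsym[of i k j] dsym[of j k i] by (simp add: sum.distrib lower field_simps)
qed

lemma christoffel_combination:
  fixes M :: "real^'n::finite \<Rightarrow> real^'n^'n" and C :: "'n \<Rightarrow> 'n \<Rightarrow> 'n \<Rightarrow> real"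
  assumes sym: "\<And>i j. M y $ i $ j = M y $ j $ i"
    and Csym: "\<And>k i j. C k i j = C k j i"
    and dM: "\<And>k i j. pd k (\<lambda>z. M z $ i $ j) y
        = (\<Sum>l\<in>UNIV. C l k i * M y $ l $ j + C l k j * M y $ i $ l)"
  shows "pd i (\<lambda>z. M z $ j $ l) y + pd j (\<lambda>z. M z $ i $ l) y - pd l (\<lambda>z. M z $ i $ j) y
      = 2 * (\<Sum>p\<in>UNIV. C p i j * M y $ p $ l)"
proof -
  have "pd i (\<lambda>z. M z $ j $ l) y + pd j (\<lambda>z. M z $ i $ l) y - pd l (\<lambda>z. M z $ i $ j) y
    = (\<Sum>p\<in>UNIV. (C p i j * M y $ p $ l + C p i l * M y $ j $ p) + (C p j i * M y $ p $ l + C p j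
      l * M y $ i $ p)
         - (C p l i * M y $ p $ j + C p l j * M y $ i $ p))"
    unfolding dM by (simp only: sum.distrib sum_subtractf)
  also have "\<dots> = (\<Sum>p\<in>UNIV. 2 * (C p i j * M y $ p $ l))"
  proof (rule sum.cong[OF refl])
    fix p
    have "C p j i = C p i j" "C p l i = C p i l" "C p l j = C p j l" "M y $ p $ j = M y $ j $ p"
      using Csym sym by auto
    then show "(C p i j * M y $ p $ l + C p i l * M y $ j $ p)
        + (C p j i * M y $ p $ l + C p j l * M y $ i $ p)
         - (C p l i * M y $ p $ j + C p l j * M y $ i $ p) = 2 * (C p i j * M y $ p $ l)"
      by (simp add: algebra_simps)
  qed
  finally show ?thesis by (simp add: sum_distrib_left)
qed

lemma christ_eqI:
  fixes M :: "real^'n::finite \<Rightarrow> real^'n^'n" and C :: "'n \<Rightarrow> 'n \<Rightarrow> 'n \<Rightarrow> real"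
  assumes sym: "\<And>i j. M y $ i $ j = M y $ j $ i"
    and inv: "\<And>k j. (\<Sum>l\<in>UNIV. ginv M y $ k $ l * M y $ l $ j) = kdelta k j"
    and Csym: "\<And>k i j. C k i j = C k j i"
    and dM: "\<And>k i j. pd k (\<lambda>z. M z $ i $ j) y
        = (\<Sum>l\<in>UNIV. C l k i * M y $ l $ j + C l k j * M y $ i $ l)"
  shows "christ M y k i j = C k i j"
proof -
  have "christ M y k i j = (\<Sum>l\<in>UNIV. \<Sum>p\<in>UNIV. C p i j * (ginv M y $ k $ l * M y $ l $ p))"
    unfolding christ_def christoffel_combination[OF sym Csym dM]
    by (simp add: sum_distrib_left sym mult_ac)
  also have "\<dots> = (\<Sum>p\<in>UNIV. C p i j * (\<Sum>l\<in>UNIV. ginv M y $ k $ l * M y $ l $ p))"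
    by (subst sum.swap) (simp add: sum_distrib_left)
  also have "\<dots> = C k i j" unfolding inv by (simp add: kdelta_sym[of k])
  finally show ?thesis .
qed

section \<open>Pointwise algebra of a conformal change\<close>

text \<open>At a fixed point, \<open>h\<close> is a symmetric matrix with inverse \<open>hi\<close>, \<open>a\<close> plays the role of
  \<open>d\<alpha>\<close>, \<open>b = hi a\<close> of the \<open>h\<close>-gradient of \<open>\<alpha>\<close>, and \<open>c\<close> of \<open>1 / (2 \<alpha>)\<close>.  Then \<open>diff_tensor\<close>
  is the difference between the Christoffel symbols of \<open>\<alpha> h\<close> and those of \<open>h\<close>.\<close>

locale conformal_difference =
  fixes hi h :: "'n::finite \<Rightarrow> 'n \<Rightarrow> real" and a b :: "'n \<Rightarrow> real" and c :: real
  assumes h_sym: "h i j = h j i" and hi_sym: "hi i j = hi j i"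
    and hi_h: "(\<Sum>l\<in>UNIV. hi i l * h l j) = kdelta i j"
    and b_eq: "b k = (\<Sum>l\<in>UNIV. hi k l * a l)"
begin

definition diff_tensor :: "'n \<Rightarrow> 'n \<Rightarrow> 'n \<Rightarrow> real" where
  "diff_tensor r \<nu> s = c * (kdelta r s * a \<nu> + kdelta r \<nu> * a s - b r * h \<nu> s)"

lemma b_lower: "(\<Sum>l\<in>UNIV. b l * h l j) = a j"
proof -
  have "(\<Sum>l\<in>UNIV. b l * h l j) = (\<Sum>l\<in>UNIV. \<Sum>m\<in>UNIV. hi l m * a m * h l j)"
    by (simp add: b_eq sum_distrib_right)
  also have "\<dots> = (\<Sum>m\<in>UNIV. a m * (\<Sum>l\<in>UNIV. hi m l * h l j))"
    by (subst sum.swap) (simp add: sum_distrib_left hi_sym mult_ac)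
  finally show ?thesis by (simp add: hi_h)
qed

lemma h_b: "(\<Sum>l\<in>UNIV. h j l * b l) = a j"
  using b_lower by (simp add: h_sym[of j] mult.commute)

lemma b_lower': "(\<Sum>l\<in>UNIV. b l * h j l) = a j"
  using h_b by (simp add: mult.commute)

lemma diff_tensor_compat:
  "(\<Sum>l\<in>UNIV. diff_tensor l k i * h l j + diff_tensor l k j * h i l) = 2 * c * a k * h i j"
proof -
  have "(\<Sum>l\<in>UNIV. diff_tensor l k i * h l j + diff_tensor l k j * h i l)
      = c * (a k * h i j + a i * h k j - h k i * (\<Sum>l\<in>UNIV. b l * h l j)
          + a k * h i j + a j * h i k - h k j * (\<Sum>l\<in>UNIV. b l * h i l))"
    unfolding diff_tensor_def
    by (simp add: kdelta_expand ring_distribs sum.distrib sum_subtractf sum_distrib_left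
        sum_distrib_right sum_negf mult_ac)
  then show ?thesis unfolding b_lower b_lower' using h_sym[of i k] by (simp add: algebra_simps)
qed

end

text \<open>The symmetric \<open>\<Gamma>\<close> is a connection for which \<open>h\<close> is parallel, and \<open>dh\<close>, \<open>da\<close>, \<open>db\<close> are the
  coordinate derivatives of \<open>h\<close>, \<open>a\<close>, \<open>b\<close> (so \<open>db_lower\<close> is the derivative of \<open>b_lower\<close>).
  Then \<open>diff_tensor_deriv \<mu>\<close> is the derivative of \<open>diff_tensor\<close> and \<open>ricci_diff\<close> is the
  difference of the Ricci tensors of \<open>\<alpha> h\<close> and \<open>h\<close>.\<close>

locale conformal_ricci = conformal_difference hi h a b c
  for hi h :: "'n::finite \<Rightarrow> 'n \<Rightarrow> real" and a b :: "'n \<Rightarrow> real" and c :: real +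
  fixes \<Gamma> dh :: "'n \<Rightarrow> 'n \<Rightarrow> 'n \<Rightarrow> real" and da db :: "'n \<Rightarrow> 'n \<Rightarrow> real"
  assumes Gamma_sym: "\<Gamma> k i j = \<Gamma> k j i"
    and dh_eq: "dh \<mu> i j = (\<Sum>l\<in>UNIV. \<Gamma> l \<mu> i * h l j + \<Gamma> l \<mu> j * h i l)"
    and db_lower: "(\<Sum>r\<in>UNIV. db \<mu> r * h r s + b r * dh \<mu> r s) = da \<mu> s"
begin

definition htr :: "('n \<Rightarrow> 'n \<Rightarrow> real) \<Rightarrow> real" where
  "htr f = (\<Sum>s\<in>UNIV. \<Sum>\<nu>\<in>UNIV. hi s \<nu> * f s \<nu>)"

definition grad_sq :: real where
  "grad_sq = (\<Sum>l\<in>UNIV. b l * a l)"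

definition div_b :: real where
  "div_b = (\<Sum>r\<in>UNIV. db r r)"

definition christ_tr :: "'n \<Rightarrow> real" where
  "christ_tr l = (\<Sum>r\<in>UNIV. \<Gamma> r r l)"

definition htr_christ :: "'n \<Rightarrow> real" where
  "htr_christ l = htr (\<lambda>s \<nu>. \<Gamma> l \<nu> s)"

definition diff_tensor_deriv :: "'n \<Rightarrow> 'n \<Rightarrow> 'n \<Rightarrow> 'n \<Rightarrow> real" where
  "diff_tensor_deriv \<mu> r \<nu> s =
     - 2 * c^2 * a \<mu> * (kdelta r s * a \<nu> + kdelta r \<nu> * a s - b r * h \<nu> s)
     + c * (kdelta r s * da \<mu> \<nu> + kdelta r \<nu> * da \<mu> s - (db \<mu> r * h \<nu> s + b r * dh \<mu> \<nu> s))"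

definition ricci_diff :: "'n \<Rightarrow> 'n \<Rightarrow> real" where
  "ricci_diff s \<nu> = (\<Sum>r\<in>UNIV. diff_tensor_deriv r r \<nu> s) - (\<Sum>r\<in>UNIV. diff_tensor_deriv \<nu> r r s)
     + (\<Sum>r\<in>UNIV. \<Sum>l\<in>UNIV. \<Gamma> r r l * diff_tensor l \<nu> s)
     + (\<Sum>r\<in>UNIV. \<Sum>l\<in>UNIV. diff_tensor r r l * \<Gamma> l \<nu> s)
     + (\<Sum>r\<in>UNIV. \<Sum>l\<in>UNIV. diff_tensor r r l * diff_tensor l \<nu> s)
     - (\<Sum>r\<in>UNIV. \<Sum>l\<in>UNIV. \<Gamma> r \<nu> l * diff_tensor l r s)
     - (\<Sum>r\<in>UNIV. \<Sum>l\<in>UNIV. diff_tensor r \<nu> l * \<Gamma> l r s)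
     - (\<Sum>r\<in>UNIV. \<Sum>l\<in>UNIV. diff_tensor r \<nu> l * diff_tensor l r s)"

lemmas contraction_simps = kdelta_expand ring_distribs sum.distrib sum_subtractf sum_distrib_left
  sum_distrib_right sum_negf mult_ac

lemma htr_add [simp]: "htr (\<lambda>s \<nu>. f s \<nu> + g s \<nu>) = htr f + htr g"
  unfolding htr_def by (simp add: ring_distribs sum.distrib)

lemma htr_diff [simp]: "htr (\<lambda>s \<nu>. f s \<nu> - g s \<nu>) = htr f - htr g"
  unfolding htr_def by (simp add: ring_distribs sum_subtractf)

lemma htr_cmult [simp]: "htr (\<lambda>s \<nu>. x * f s \<nu>) = x * htr f"
  unfolding htr_def by (simp add: sum_distrib_left mult_ac)

lemma htr_sum [simp]: "htr (\<lambda>s \<nu>. \<Sum>r\<in>UNIV. f r s \<nu>) = (\<Sum>r\<in>UNIV. htr (f r))"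
proof -
  have "htr (\<lambda>s \<nu>. \<Sum>r\<in>UNIV. f r s \<nu>) = (\<Sum>s\<in>UNIV. \<Sum>\<nu>\<in>UNIV. \<Sum>r\<in>UNIV. hi s \<nu> * f r s \<nu>)"
    unfolding htr_def by (simp only: sum_distrib_left)
  also have "\<dots> = (\<Sum>s\<in>UNIV. \<Sum>r\<in>UNIV. \<Sum>\<nu>\<in>UNIV. hi s \<nu> * f r s \<nu>)"
    by (rule sum.cong[OF refl], rule sum.swap)
  also have "\<dots> = (\<Sum>r\<in>UNIV. \<Sum>s\<in>UNIV. \<Sum>\<nu>\<in>UNIV. hi s \<nu> * f r s \<nu>)"
    by (rule sum.swap)
  finally show ?thesis unfolding htr_def .
qed

lemma htr_swap: "htr (\<lambda>s \<nu>. f \<nu> s) = htr f"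
proof -
  have "htr (\<lambda>s \<nu>. f \<nu> s) = (\<Sum>\<nu>\<in>UNIV. \<Sum>s\<in>UNIV. hi s \<nu> * f \<nu> s)"
    unfolding htr_def by (rule sum.swap)
  also have "\<dots> = (\<Sum>\<nu>\<in>UNIV. \<Sum>s\<in>UNIV. hi \<nu> s * f \<nu> s)"
    by (intro sum.cong refl) (simp add: hi_sym)
  finally show ?thesis unfolding htr_def .
qed

lemma hi_h': "(\<Sum>s\<in>UNIV. hi s \<nu> * h l s) = kdelta \<nu> l"
  using hi_h by (simp add: hi_sym[of _ \<nu>] h_sym[of l])

lemma htr_tensor: "htr (\<lambda>s \<nu>. u s * v \<nu>) = (\<Sum>s\<in>UNIV. u s * (\<Sum>\<nu>\<in>UNIV. hi s \<nu> * v \<nu>))"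
  unfolding htr_def by (simp add: sum_distrib_left mult_ac)

lemma htr_a_a: "htr (\<lambda>s \<nu>. a s * a \<nu>) = grad_sq"
  unfolding htr_tensor grad_sq_def b_eq[symmetric] by (simp add: mult.commute)

lemma htr_a_a': "htr (\<lambda>s \<nu>. a \<nu> * a s) = grad_sq"
  using htr_a_a htr_swap[of "\<lambda>s \<nu>. a s * a \<nu>"] by simp

lemma htr_h: "htr (\<lambda>s \<nu>. h \<nu> s) = real CARD('n)"
  unfolding htr_def by (simp add: hi_h)

lemma htr_a_left: "htr (\<lambda>s \<nu>. a s * v \<nu>) = (\<Sum>\<nu>\<in>UNIV. b \<nu> * v \<nu>)"
proof -
  have "htr (\<lambda>s \<nu>. a s * v \<nu>) = (\<Sum>\<nu>\<in>UNIV. v \<nu> * (\<Sum>s\<in>UNIV. hi \<nu> s * a s))"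
    unfolding htr_def
    by (subst sum.swap) (simp add: sum_distrib_left hi_sym[of _ \<nu> for \<nu>] mult_ac)
  then show ?thesis unfolding b_eq[symmetric] by (simp add: mult.commute)
qed

lemma htr_a_left': "htr (\<lambda>s \<nu>. a \<nu> * v s) = (\<Sum>s\<in>UNIV. v s * b s)"
  using htr_swap[of "\<lambda>s \<nu>. a s * v \<nu>"] htr_a_left[of v] by (simp add: mult.commute)

lemma htr_lower_left: "htr (\<lambda>s \<nu>. \<Sum>l\<in>UNIV. F l \<nu> * h l s) = (\<Sum>l\<in>UNIV. F l l)"
proof -
  have "htr (\<lambda>s \<nu>. \<Sum>l\<in>UNIV. F l \<nu> * h l s)
      = (\<Sum>\<nu>\<in>UNIV. \<Sum>s\<in>UNIV. \<Sum>l\<in>UNIV. hi s \<nu> * (F l \<nu> * h l s))"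
    unfolding htr_def by (subst sum.swap) (simp only: sum_distrib_left)
  also have "\<dots> = (\<Sum>\<nu>\<in>UNIV. \<Sum>l\<in>UNIV. F l \<nu> * (\<Sum>s\<in>UNIV. hi s \<nu> * h l s))"
    by (rule sum.cong[OF refl], subst sum.swap) (simp add: sum_distrib_left mult_ac)
  finally show ?thesis by (simp add: hi_h')
qed

lemma htr_lower_right: "htr (\<lambda>s \<nu>. \<Sum>l\<in>UNIV. F l s * h \<nu> l) = (\<Sum>l\<in>UNIV. F l l)"
  using htr_swap[of "\<lambda>s \<nu>. \<Sum>l\<in>UNIV. F l \<nu> * h l s"] htr_lower_left[of F]
  by (simp add: h_sym[of _ "l" for l])

lemma htr_dh: "htr (\<lambda>s \<nu>. dh r \<nu> s) = 2 * christ_tr r"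
proof -
  have "htr (\<lambda>s \<nu>. dh r \<nu> s) = htr (\<lambda>s \<nu>. \<Sum>l\<in>UNIV. \<Gamma> l r \<nu> * h l s)
      + htr (\<lambda>s \<nu>. \<Sum>l\<in>UNIV. \<Gamma> l r s * h \<nu> l)"
    unfolding dh_eq by (simp add: sum.distrib)
  also have "\<dots> = (\<Sum>l\<in>UNIV. \<Gamma> l r l) + (\<Sum>l\<in>UNIV. \<Gamma> l r l)"
    using htr_lower_left[of "\<lambda>l \<nu>. \<Gamma> l r \<nu>"] htr_lower_right[of "\<lambda>l s. \<Gamma> l r s"] by simp
  finally show ?thesis unfolding christ_tr_def by (simp add: Gamma_sym[of _ r])
qed

lemma htr_diff_tensor: "htr (\<lambda>s \<nu>. diff_tensor l \<nu> s) = c * (2 - real CARD('n)) * b l"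
proof -
  have "htr (\<lambda>s \<nu>. kdelta l s * a \<nu>) = b l" "htr (\<lambda>s \<nu>. kdelta l \<nu> * a s) = b l"
    unfolding htr_def b_eq by (simp_all add: kdelta_expand hi_sym[of _ l])
  then show ?thesis
    unfolding diff_tensor_def
    by (simp only: htr_add htr_diff htr_cmult htr_h) (simp add: algebra_simps)
qed

lemma trace_diff_tensor: "(\<Sum>r\<in>UNIV. diff_tensor r r l) = c * real CARD('n) * a l"
proof -
  have "(\<Sum>r\<in>UNIV. diff_tensor r r l) = c * (a l + real CARD('n) * a l - (\<Sum>r\<in>UNIV. b r * h r l))"
    unfolding diff_tensor_def by (simp add: contraction_simps)
  then show ?thesis unfolding b_lower by (simp add: algebra_simps)
qed

lemma htr_div_diff_tensor_deriv:
  "htr (\<lambda>s \<nu>. \<Sum>r\<in>UNIV. diff_tensor_deriv r r \<nu> s)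
     = - 4 * c^2 * grad_sq + 2 * c^2 * grad_sq * real CARD('n) + 2 * c * htr da
       - real CARD('n) * c * div_b - 2 * c * (\<Sum>r\<in>UNIV. b r * christ_tr r)"
proof -
  have expand: "(\<Sum>r\<in>UNIV. diff_tensor_deriv r r \<nu> s)
      = - 2 * c^2 * (a s * a \<nu>) - 2 * c^2 * (a \<nu> * a s) + 2 * c^2 * grad_sq * h \<nu> s
        + c * (da s \<nu> + da \<nu> s - div_b * h \<nu> s - (\<Sum>r\<in>UNIV. b r * dh r \<nu> s))" for \<nu> s
    unfolding diff_tensor_deriv_def grad_sq_def div_b_def by (simp add: contraction_simps)
  have "htr (\<lambda>s \<nu>. \<Sum>r\<in>UNIV. diff_tensor_deriv r r \<nu> s)
      = - 2 * c^2 * htr (\<lambda>s \<nu>. a s * a \<nu>) - 2 * c^2 * htr (\<lambda>s \<nu>. a \<nu> * a s)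
        + 2 * c^2 * grad_sq * htr (\<lambda>s \<nu>. h \<nu> s)
        + c * (htr da + htr (\<lambda>s \<nu>. da \<nu> s) - div_b * htr (\<lambda>s \<nu>. h \<nu> s)
          - (\<Sum>r\<in>UNIV. b r * htr (\<lambda>s \<nu>. dh r \<nu> s)))"
    unfolding expand by (simp only: htr_add htr_diff htr_cmult htr_sum)
  then show ?thesis
    unfolding htr_a_a htr_a_a' htr_swap[of da] htr_h htr_dh
    by (simp add: algebra_simps sum_distrib_left)
qed

lemma htr_grad_trace_diff_tensor_deriv:
  "htr (\<lambda>s \<nu>. \<Sum>r\<in>UNIV. diff_tensor_deriv \<nu> r r s)
     = - 2 * c^2 * real CARD('n) * grad_sq + c * real CARD('n) * htr da"
proof -
  have "(\<Sum>r\<in>UNIV. diff_tensor_deriv \<nu> r r s)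
      = - 2 * c^2 * a \<nu> * (a s + real CARD('n) * a s - (\<Sum>r\<in>UNIV. b r * h r s))
        + c * (da \<nu> s + real CARD('n) * da \<nu> s
          - (\<Sum>r\<in>UNIV. db \<nu> r * h r s + b r * dh \<nu> r s))" for \<nu> s
    unfolding diff_tensor_deriv_def by (simp add: contraction_simps)
  then have "(\<Sum>r\<in>UNIV. diff_tensor_deriv \<nu> r r s)
      = (- 2 * c^2 * real CARD('n)) * (a \<nu> * a s) + (c * real CARD('n)) * da \<nu> s" for \<nu> s
    using b_lower db_lower by (simp add: algebra_simps)
  then show ?thesis by (simp only: htr_add htr_cmult htr_a_a' htr_swap[of da])
qed

lemma htr_christ_tr_diff_tensor:
  "htr (\<lambda>s \<nu>. \<Sum>r\<in>UNIV. \<Sum>l\<in>UNIV. \<Gamma> r r l * diff_tensor l \<nu> s)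
     = c * (2 - real CARD('n)) * (\<Sum>l\<in>UNIV. b l * christ_tr l)"
proof -
  have "htr (\<lambda>s \<nu>. \<Sum>r\<in>UNIV. \<Sum>l\<in>UNIV. \<Gamma> r r l * diff_tensor l \<nu> s)
      = (\<Sum>r\<in>UNIV. \<Sum>l\<in>UNIV. \<Gamma> r r l * (c * (2 - real CARD('n)) * b l))"
    by (simp only: htr_sum htr_cmult htr_diff_tensor)
  then show ?thesis
    unfolding christ_tr_def
    by (subst (asm) sum.swap) (simp add: sum_distrib_left sum_distrib_right mult_ac)
qed

lemma htr_trace_diff_tensor_christ:
  "htr (\<lambda>s \<nu>. \<Sum>r\<in>UNIV. \<Sum>l\<in>UNIV. diff_tensor r r l * \<Gamma> l \<nu> s)
     = c * real CARD('n) * (\<Sum>l\<in>UNIV. a l * htr_christ l)"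
proof -
  have "htr (\<lambda>s \<nu>. \<Sum>r\<in>UNIV. \<Sum>l\<in>UNIV. diff_tensor r r l * \<Gamma> l \<nu> s)
      = (\<Sum>l\<in>UNIV. (\<Sum>r\<in>UNIV. diff_tensor r r l) * htr_christ l)"
    unfolding htr_christ_def
    by (simp only: htr_sum htr_cmult) (subst sum.swap, simp add: sum_distrib_right)
  then show ?thesis unfolding trace_diff_tensor by (simp add: sum_distrib_left mult_ac)
qed

lemma htr_trace_diff_tensor_sq:
  "htr (\<lambda>s \<nu>. \<Sum>r\<in>UNIV. \<Sum>l\<in>UNIV. diff_tensor r r l * diff_tensor l \<nu> s)
     = c^2 * real CARD('n) * (2 - real CARD('n)) * grad_sq"
proof -
  have "htr (\<lambda>s \<nu>. \<Sum>r\<in>UNIV. \<Sum>l\<in>UNIV. diff_tensor r r l * diff_tensor l \<nu> s)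
      = (\<Sum>l\<in>UNIV. (\<Sum>r\<in>UNIV. diff_tensor r r l) * (c * (2 - real CARD('n)) * b l))"
    by (simp only: htr_sum htr_cmult htr_diff_tensor) (subst sum.swap, simp add: sum_distrib_right)
  then show ?thesis
    unfolding trace_diff_tensor grad_sq_def by (simp add: sum_distrib_left power2_eq_square mult_ac)
qed

lemma htr_christ_diff_tensor:
  "htr (\<lambda>s \<nu>. \<Sum>r\<in>UNIV. \<Sum>l\<in>UNIV. \<Gamma> r \<nu> l * diff_tensor l r s)
     = c * (\<Sum>l\<in>UNIV. a l * htr_christ l)"
proof -
  have expand: "(\<Sum>r\<in>UNIV. \<Sum>l\<in>UNIV. \<Gamma> r \<nu> l * diff_tensor l r s)
      = c * ((\<Sum>r\<in>UNIV. a r * \<Gamma> r \<nu> s) + a s * (\<Sum>r\<in>UNIV. \<Gamma> r \<nu> r)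
        - (\<Sum>r\<in>UNIV. (\<Sum>l\<in>UNIV. \<Gamma> r \<nu> l * b l) * h r s))" for \<nu> s
    unfolding diff_tensor_def by (simp add: contraction_simps)
  have "(\<Sum>\<nu>\<in>UNIV. b \<nu> * (\<Sum>r\<in>UNIV. \<Gamma> r \<nu> r)) = (\<Sum>\<nu>\<in>UNIV. \<Sum>r\<in>UNIV. \<Gamma> r r \<nu> * b \<nu>)"
    unfolding sum_distrib_left by (intro sum.cong refl) (metis Gamma_sym mult.commute)
  also have "\<dots> = (\<Sum>r\<in>UNIV. \<Sum>l\<in>UNIV. \<Gamma> r r l * b l)" by (rule sum.swap)
  finally have "htr (\<lambda>s \<nu>. a s * (\<Sum>r\<in>UNIV. \<Gamma> r \<nu> r))
      = htr (\<lambda>s \<nu>. \<Sum>r\<in>UNIV. (\<Sum>l\<in>UNIV. \<Gamma> r \<nu> l * b l) * h r s)"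
    unfolding htr_a_left htr_lower_left .
  then show ?thesis
    unfolding expand htr_christ_def by (simp only: htr_add htr_diff htr_cmult htr_sum) simp
qed

lemma htr_diff_tensor_christ:
  "htr (\<lambda>s \<nu>. \<Sum>r\<in>UNIV. \<Sum>l\<in>UNIV. diff_tensor r \<nu> l * \<Gamma> l r s)
     = c * (\<Sum>l\<in>UNIV. a l * htr_christ l)"
proof -
  have expand: "(\<Sum>r\<in>UNIV. \<Sum>l\<in>UNIV. diff_tensor r \<nu> l * \<Gamma> l r s)
      = c * (a \<nu> * (\<Sum>r\<in>UNIV. \<Gamma> r r s) + (\<Sum>l\<in>UNIV. a l * \<Gamma> l \<nu> s)
        - (\<Sum>l\<in>UNIV. (\<Sum>r\<in>UNIV. b r * \<Gamma> l r s) * h \<nu> l))" for \<nu> s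
    unfolding diff_tensor_def
    by (simp add: contraction_simps) (subst sum.swap, simp add: sum_distrib_left mult_ac)
  have "(\<Sum>l\<in>UNIV. \<Sum>r\<in>UNIV. b r * \<Gamma> l r l) = (\<Sum>l\<in>UNIV. \<Sum>r\<in>UNIV. \<Gamma> l l r * b r)"
    by (intro sum.cong refl) (metis Gamma_sym mult.commute)
  also have "\<dots> = (\<Sum>s\<in>UNIV. (\<Sum>r\<in>UNIV. \<Gamma> r r s) * b s)"
    by (subst sum.swap) (simp add: sum_distrib_right)
  finally have "htr (\<lambda>s \<nu>. a \<nu> * (\<Sum>r\<in>UNIV. \<Gamma> r r s))
      = htr (\<lambda>s \<nu>. \<Sum>l\<in>UNIV. (\<Sum>r\<in>UNIV. b r * \<Gamma> l r s) * h \<nu> l)"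
    unfolding htr_a_left' htr_lower_right by simp
  then show ?thesis
    unfolding expand htr_christ_def by (simp only: htr_add htr_diff htr_cmult htr_sum) simp
qed

lemma htr_diff_tensor_sq:
  "htr (\<lambda>s \<nu>. \<Sum>r\<in>UNIV. \<Sum>l\<in>UNIV. diff_tensor r \<nu> l * diff_tensor l r s)
     = c^2 * (2 - real CARD('n)) * grad_sq"
proof -
  have expand: "(\<Sum>r\<in>UNIV. \<Sum>l\<in>UNIV. diff_tensor r \<nu> l * diff_tensor l r s)
      = c^2 * (a \<nu> * a s + real CARD('n) * (a \<nu> * a s) - a \<nu> * (\<Sum>r\<in>UNIV. b r * h r s)
        + a s * a \<nu> + a \<nu> * a s - (\<Sum>l\<in>UNIV. a l * b l) * h \<nu> s
        - (\<Sum>r\<in>UNIV. b r * a r) * h \<nu> s - a s * (\<Sum>r\<in>UNIV. b r * h \<nu> r)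
        + (\<Sum>r\<in>UNIV. b r * h r s) * (\<Sum>l\<in>UNIV. h \<nu> l * b l))" for \<nu> s
    unfolding diff_tensor_def sum_product by (simp add: contraction_simps power2_eq_square)
  have "(\<Sum>r\<in>UNIV. \<Sum>l\<in>UNIV. diff_tensor r \<nu> l * diff_tensor l r s)
      = (c^2 * (real CARD('n) + 2)) * (a s * a \<nu>) - (2 * c^2 * grad_sq) * h \<nu> s" for \<nu> s
    unfolding expand b_lower h_b b_lower' grad_sq_def by (simp add: algebra_simps)
  then show ?thesis by (simp only: htr_diff htr_cmult htr_a_a htr_h) (simp add: algebra_simps)
qed

lemma htr_ricci_diff:
  "htr ricci_diff = - (real CARD('n) - 1) * (real CARD('n) - 6) * c^2 * grad_sq
     + (2 - real CARD('n)) * c * (htr da - (\<Sum>l\<in>UNIV. a l * htr_christ l))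
     - real CARD('n) * c * (div_b + (\<Sum>l\<in>UNIV. b l * christ_tr l))"
  unfolding ricci_diff_def[abs_def] htr_add htr_diff htr_div_diff_tensor_deriv
    htr_grad_trace_diff_tensor_deriv htr_christ_tr_diff_tensor htr_trace_diff_tensor_christ
    htr_trace_diff_tensor_sq htr_christ_diff_tensor htr_diff_tensor_christ htr_diff_tensor_sq
  by (simp add: algebra_simps power2_eq_square)

end

locale pkn_deformation =
  fixes U :: "(real^'n::finite) set" and F G :: "real^'n \<Rightarrow> real^'n^'n"
    and V :: "real^'n \<Rightarrow> real^'n" and \<alpha> :: "real^'n \<Rightarrow> real"
  assumes U_open: "open U"
    and pkn: "para_kaehler_norden U F G"
    and V_unit_parallel: "unit_parallel U G V"
    and alpha_smooth: "smooth_on U \<alpha>"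
    and alpha_pos: "\<forall>x\<in>U. \<alpha> x > 0"
    and FV_alpha: "\<forall>x\<in>U. (\<Sum>i\<in>UNIV. (F x *v V x) $ i * pd i \<alpha> x) = 0"
begin

abbreviation G\<alpha> :: "real^'n \<Rightarrow> real^'n^'n" where
  "G\<alpha> \<equiv> deformed_metric G F V \<alpha>"

definition xi :: "real^'n \<Rightarrow> 'n \<Rightarrow> real" where
  "xi z i = (\<Sum>j\<in>UNIV. F z $ i $ j * V z $ j)"

definition xi_flat :: "real^'n \<Rightarrow> 'n \<Rightarrow> real" where
  "xi_flat z i = (\<Sum>j\<in>UNIV. G z $ i $ j * xi z j)"

definition hmet :: "real^'n \<Rightarrow> 'n \<Rightarrow> 'n \<Rightarrow> real" where
  "hmet z i j = G z $ i $ j + xi_flat z i * xi_flat z j"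

text \<open>Sherman-Morrison for the rank-one update of \<open>G\<close>, using \<open>g(\<xi>,\<xi>) = 1\<close>.\<close>
definition hmet_inv :: "real^'n \<Rightarrow> 'n \<Rightarrow> 'n \<Rightarrow> real" where
  "hmet_inv z i j = ginv G z $ i $ j - (1/2) * xi z i * xi z j"

definition dalpha :: "real^'n \<Rightarrow> 'n \<Rightarrow> real" where
  "dalpha z i = pd i \<alpha> z"

definition grad_alpha :: "real^'n \<Rightarrow> 'n \<Rightarrow> real" where
  "grad_alpha z k = gradc G \<alpha> z k"

text \<open>\<open>diff_tensor_at\<close> with its definition unfolded, so that it can be differentiated in the point.\<close>
definition conf_diff :: "real^'n \<Rightarrow> 'n \<Rightarrow> 'n \<Rightarrow> 'n \<Rightarrow> real" where
  "conf_diff z k i j = (1 / (2 * \<alpha> z)) *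
     (kdelta k j * dalpha z i + kdelta k i * dalpha z j - grad_alpha z k * hmet z i j)"

definition d_hmet :: "real^'n \<Rightarrow> 'n \<Rightarrow> 'n \<Rightarrow> 'n \<Rightarrow> real" where
  "d_hmet x \<mu> i j = pd \<mu> (\<lambda>y. hmet y i j) x"

definition hess_alpha :: "real^'n \<Rightarrow> 'n \<Rightarrow> 'n \<Rightarrow> real" where
  "hess_alpha x \<mu> \<nu> = pd \<mu> (\<lambda>y. dalpha y \<nu>) x"

definition d_grad_alpha :: "real^'n \<Rightarrow> 'n \<Rightarrow> 'n \<Rightarrow> real" where
  "d_grad_alpha x \<mu> k = pd \<mu> (\<lambda>y. grad_alpha y k) x"

abbreviation diff_tensor_at :: "real^'n \<Rightarrow> 'n \<Rightarrow> 'n \<Rightarrow> 'n \<Rightarrow> real" where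
  "diff_tensor_at x \<equiv>
     conformal_difference.diff_tensor (hmet x) (dalpha x) (grad_alpha x) (1 / (2 * \<alpha> x))"

abbreviation diff_tensor_deriv_at :: "real^'n \<Rightarrow> 'n \<Rightarrow> 'n \<Rightarrow> 'n \<Rightarrow> 'n \<Rightarrow> real" where
  "diff_tensor_deriv_at x \<equiv> conformal_ricci.diff_tensor_deriv (hmet x) (dalpha x) (grad_alpha x)
     (1 / (2 * \<alpha> x)) (d_hmet x) (hess_alpha x) (d_grad_alpha x)"

abbreviation ricci_diff_at :: "real^'n \<Rightarrow> 'n \<Rightarrow> 'n \<Rightarrow> real" where
  "ricci_diff_at x \<equiv> conformal_ricci.ricci_diff (hmet x) (dalpha x) (grad_alpha x)
     (1 / (2 * \<alpha> x)) (christ G x) (d_hmet x) (hess_alpha x) (d_grad_alpha x)"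

lemma G_riemannian: "riemannian_metric_on U G"
  using pkn unfolding para_kaehler_norden_def by blast

lemma G_symmetric: "\<forall>z\<in>U. transpose (G z) = G z"
  using G_riemannian unfolding riemannian_metric_on_def by blast

lemma G_sym: "y \<in> U \<Longrightarrow> G y $ i $ j = G y $ j $ i"
  using G_symmetric by (simp add: symmetric_entries)

lemma G_invertible: "y \<in> U \<Longrightarrow> invertible (G y)"
  using G_riemannian pos_def_invertible unfolding riemannian_metric_on_def by blast

lemma ginv_G: "y \<in> U \<Longrightarrow> (\<Sum>l\<in>UNIV. ginv G y $ i $ l * G y $ l $ j) = kdelta i j"
  unfolding ginv_def by (rule matrix_inv_entries(1)[OF G_invertible])

lemma G_ginv: "y \<in> U \<Longrightarrow> (\<Sum>l\<in>UNIV. G y $ i $ l * ginv G y $ l $ j) = kdelta i j"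
  unfolding ginv_def by (rule matrix_inv_entries(2)[OF G_invertible])

lemma ginv_sym: "y \<in> U \<Longrightarrow> ginv G y $ i $ j = ginv G y $ j $ i"
  unfolding ginv_def
  by (intro symmetric_entries transpose_matrix_inv_symmetric G_invertible) (use G_symmetric in
    blast)

lemma christ_G_sym: "y \<in> U \<Longrightarrow> christ G y k i j = christ G y k j i"
  by (rule christ_sym[OF U_open _ G_symmetric])

lemma pd_G_christ:
  "y \<in> U \<Longrightarrow> pd k (\<lambda>z. G z $ i $ j) y
     = (\<Sum>l\<in>UNIV. christ G y l k i * G y $ l $ j + christ G y l k j * G y $ i $ l)"
  by (rule pd_metric_christ[OF U_open _ G_symmetric G_invertible])

lemma G_smooth: "smooth_on U (\<lambda>y. G y $ i $ j)"
  using G_riemannian unfolding riemannian_metric_on_def by blast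

lemma F_smooth: "smooth_on U (\<lambda>y. F y $ i $ j)"
  using pkn unfolding para_kaehler_norden_def by blast

lemma V_smooth: "smooth_on U (\<lambda>y. V y $ i)"
  using V_unit_parallel unfolding unit_parallel_def by blast

lemma G_differentiable: "y \<in> U \<Longrightarrow> (\<lambda>z. G z $ i $ j) differentiable (at y)"
  using smooth_on_differentiable[OF G_smooth U_open] .

lemma F_differentiable: "y \<in> U \<Longrightarrow> (\<lambda>z. F z $ i $ j) differentiable (at y)"
  using smooth_on_differentiable[OF F_smooth U_open] .

lemma V_differentiable: "y \<in> U \<Longrightarrow> (\<lambda>z. V z $ i) differentiable (at y)"
  using smooth_on_differentiable[OF V_smooth U_open] .

lemma alpha_differentiable: "y \<in> U \<Longrightarrow> \<alpha> differentiable (at y)"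
  using smooth_on_differentiable[OF alpha_smooth U_open] .

lemma pd_G_differentiable: "y \<in> U \<Longrightarrow> pd k (\<lambda>z. G z $ i $ j) differentiable (at y)"
  using smooth_on_pd_differentiable[OF G_smooth U_open] .

lemma dalpha_differentiable: "y \<in> U \<Longrightarrow> (\<lambda>z. dalpha z i) differentiable (at y)"
  unfolding dalpha_def using smooth_on_pd_differentiable[OF alpha_smooth U_open] by simp

lemma ginv_differentiable: "y \<in> U \<Longrightarrow> (\<lambda>z. ginv G z $ k $ l) differentiable (at y)"
  unfolding ginv_def using differentiable_matrix_inv_entry[OF U_open _ _ G_differentiable]
    G_invertible
  by blast

lemma christ_differentiable: "y \<in> U \<Longrightarrow> (\<lambda>z. christ G z k i j) differentiable (at y)"
  unfolding christ_def
  by (intro differentiable_mult differentiable_sum differentiable_add differentiable_diff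
      differentiable_const ginv_differentiable pd_G_differentiable ballI) simp_all

lemma xi_differentiable: "y \<in> U \<Longrightarrow> (\<lambda>z. xi z i) differentiable (at y)"
  unfolding xi_def
  by (intro differentiable_mult differentiable_sum F_differentiable V_differentiable ballI) simp_all

lemma xi_flat_differentiable: "y \<in> U \<Longrightarrow> (\<lambda>z. xi_flat z i) differentiable (at y)"
  unfolding xi_flat_def
  by (intro differentiable_mult differentiable_sum G_differentiable xi_differentiable ballI)
    simp_all

lemma hmet_differentiable: "y \<in> U \<Longrightarrow> (\<lambda>z. hmet z i j) differentiable (at y)"
  unfolding hmet_def
  by (intro differentiable_mult differentiable_add G_differentiable xi_flat_differentiable)

lemma grad_alpha_differentiable: "y \<in> U \<Longrightarrow> (\<lambda>z. grad_alpha z k) differentiable (at y)"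
  unfolding grad_alpha_def gradc_def dalpha_def[symmetric]
  by (intro differentiable_mult differentiable_sum ginv_differentiable dalpha_differentiable ballI)
    simp_all

lemma conf_factor_differentiable: "y \<in> U \<Longrightarrow> (\<lambda>z. 1 / (2 * \<alpha> z)) differentiable (at y)"
  using alpha_pos
  by (intro differentiable_divide differentiable_mult differentiable_const alpha_differentiable)
    auto

lemma conf_diff_differentiable: "y \<in> U \<Longrightarrow> (\<lambda>z. conf_diff z k i j) differentiable (at y)"
  unfolding conf_diff_def
  by (intro differentiable_mult differentiable_add differentiable_diff differentiable_const
      conf_factor_differentiable dalpha_differentiable grad_alpha_differentiable
        hmet_differentiable)

section \<open>The parallel unit vector field \<open>\<xi> = FV\<close> and the metric \<open>hmet\<close>\<close>

lemma pd_F: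
  "y \<in> U \<Longrightarrow> pd k (\<lambda>z. F z $ i $ j) y
     = - (\<Sum>l\<in>UNIV. christ G y i k l * F y $ l $ j - christ G y l k j * F y $ i $ l)"
  using pkn unfolding para_kaehler_norden_def nablaF_def by (simp add: eq_neg_iff_add_eq_0)

lemma pd_V: "y \<in> U \<Longrightarrow> pd k (\<lambda>z. V z $ j) y = - (\<Sum>l\<in>UNIV. christ G y j k l * V y $ l)"
  using V_unit_parallel unfolding unit_parallel_def by (simp add: eq_neg_iff_add_eq_0)

lemma pd_xi:
  assumes y: "y \<in> U"
  shows "pd k (\<lambda>z. xi z i) y = - (\<Sum>l\<in>UNIV. christ G y i k l * xi y l)"
proof -
  have "pd k (\<lambda>z. xi z i) y
      = (\<Sum>j\<in>UNIV. F y $ i $ j * pd k (\<lambda>z. V z $ j) y + pd k (\<lambda>z. F z $ i $ j) y * V y $ j)"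
    unfolding xi_def
    by (simp add: pd_sum pd_mult differentiable_mult F_differentiable V_differentiable y)
  also have "\<dots> = - (\<Sum>j\<in>UNIV. \<Sum>l\<in>UNIV. F y $ i $ j * christ G y j k l * V y $ l)
      - (\<Sum>j\<in>UNIV. \<Sum>l\<in>UNIV. christ G y i k l * F y $ l $ j * V y $ j)
      + (\<Sum>j\<in>UNIV. \<Sum>l\<in>UNIV. christ G y l k j * F y $ i $ l * V y $ j)"
    unfolding pd_V[OF y] pd_F[OF y]
    by (simp add: sum.distrib sum_subtractf sum_negf sum_distrib_left sum_distrib_right
        ring_distribs mult_ac)
  also have "(\<Sum>j\<in>UNIV. \<Sum>l\<in>UNIV. christ G y l k j * F y $ i $ l * V y $ j)
      = (\<Sum>j\<in>UNIV. \<Sum>l\<in>UNIV. F y $ i $ j * christ G y j k l * V y $ l)"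
    by (subst sum.swap) (simp add: mult_ac)
  also have "(\<Sum>j\<in>UNIV. \<Sum>l\<in>UNIV. christ G y i k l * F y $ l $ j * V y $ j)
      = (\<Sum>l\<in>UNIV. christ G y i k l * xi y l)"
    unfolding xi_def by (subst sum.swap) (simp add: sum_distrib_left mult_ac)
  finally show ?thesis by simp
qed

lemma pd_xi_flat:
  assumes y: "y \<in> U"
  shows "pd k (\<lambda>z. xi_flat z i) y = (\<Sum>l\<in>UNIV. christ G y l k i * xi_flat y l)"
proof -
  have "pd k (\<lambda>z. xi_flat z i) y
      = (\<Sum>j\<in>UNIV. G y $ i $ j * pd k (\<lambda>z. xi z j) y + pd k (\<lambda>z. G z $ i $ j) y * xi y j)"
    unfolding xi_flat_def
    by (simp add: pd_sum pd_mult differentiable_mult G_differentiable xi_differentiable y)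
  also have "\<dots> = - (\<Sum>j\<in>UNIV. \<Sum>l\<in>UNIV. G y $ i $ j * christ G y j k l * xi y l)
      + (\<Sum>j\<in>UNIV. \<Sum>l\<in>UNIV. christ G y l k i * G y $ l $ j * xi y j)
      + (\<Sum>j\<in>UNIV. \<Sum>l\<in>UNIV. christ G y l k j * G y $ i $ l * xi y j)"
    unfolding pd_xi[OF y] pd_G_christ[OF y]
    by (simp add: sum.distrib sum_subtractf sum_negf sum_distrib_left sum_distrib_right
        ring_distribs mult_ac)
  also have "(\<Sum>j\<in>UNIV. \<Sum>l\<in>UNIV. christ G y l k j * G y $ i $ l * xi y j)
      = (\<Sum>j\<in>UNIV. \<Sum>l\<in>UNIV. G y $ i $ j * christ G y j k l * xi y l)"
    by (subst sum.swap) (simp add: mult_ac)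
  also have "(\<Sum>j\<in>UNIV. \<Sum>l\<in>UNIV. christ G y l k i * G y $ l $ j * xi y j)
      = (\<Sum>l\<in>UNIV. christ G y l k i * xi_flat y l)"
    unfolding xi_flat_def by (subst sum.swap) (simp add: sum_distrib_left mult_ac)
  finally show ?thesis by simp
qed

lemma pd_hmet:
  assumes y: "y \<in> U"
  shows "pd k (\<lambda>z. hmet z i j) y
    = (\<Sum>l\<in>UNIV. christ G y l k i * hmet y l j + christ G y l k j * hmet y i l)"
proof -
  have "pd k (\<lambda>z. hmet z i j) y = pd k (\<lambda>z. G z $ i $ j) y
      + (xi_flat y i * pd k (\<lambda>z. xi_flat z j) y + pd k (\<lambda>z. xi_flat z i) y * xi_flat y j)"
    unfolding hmet_def
    by (simp add: pd_add pd_mult differentiable_mult G_differentiable xi_flat_differentiable y)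
  then show ?thesis
    unfolding pd_G_christ[OF y] pd_xi_flat[OF y] hmet_def
    by (simp add: sum.distrib sum_distrib_left sum_distrib_right ring_distribs mult_ac)
qed

lemma xi_vec: "(F y *v V y) $ i = xi y i"
  unfolding xi_def matrix_vector_mult_def by simp

lemma xi_flat_vec: "(G y *v (F y *v V y)) $ i = xi_flat y i"
  unfolding xi_flat_def xi_def matrix_vector_mult_def by simp

lemma xi_unit:
  assumes y: "y \<in> U"
  shows "(\<Sum>i\<in>UNIV. xi y i * xi_flat y i) = 1"
proof -
  have tf: "transpose (F y) ** G y = G y ** F y" and ff: "F y ** F y = mat 1"
    using pkn y unfolding para_kaehler_norden_def by blast+
  have "(\<Sum>i\<in>UNIV. xi y i * xi_flat y i) = (F y *v V y) \<bullet> (G y *v (F y *v V y))"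
    unfolding inner_vec_def xi_vec xi_flat_vec by simp
  also have "\<dots> = (V y v* transpose (F y)) \<bullet> (G y *v (F y *v V y))" by simp
  also have "\<dots> = V y \<bullet> (transpose (F y) *v (G y *v (F y *v V y)))" by (rule dot_lmul_matrix)
  also have "transpose (F y) *v (G y *v (F y *v V y)) = G y *v V y"
    by (simp add: matrix_vector_mul_assoc matrix_mul_assoc tf)
      (simp add: matrix_mul_assoc[symmetric] ff)
  finally show ?thesis using V_unit_parallel y unfolding unit_parallel_def by simp
qed

lemma xi_dalpha: "y \<in> U \<Longrightarrow> (\<Sum>i\<in>UNIV. xi y i * dalpha y i) = 0"
  using FV_alpha unfolding xi_vec dalpha_def by blast

lemma hmet_sym: "y \<in> U \<Longrightarrow> hmet y i j = hmet y j i"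
  unfolding hmet_def using G_sym by (simp add: mult.commute)

lemma hmet_inv_sym: "y \<in> U \<Longrightarrow> hmet_inv y i j = hmet_inv y j i"
  unfolding hmet_inv_def using ginv_sym by (simp add: mult_ac)

lemma ginv_xi_flat:
  assumes y: "y \<in> U"
  shows "(\<Sum>l\<in>UNIV. ginv G y $ i $ l * xi_flat y l) = xi y i"
proof -
  have "(\<Sum>l\<in>UNIV. ginv G y $ i $ l * xi_flat y l)
      = (\<Sum>l\<in>UNIV. \<Sum>m\<in>UNIV. ginv G y $ i $ l * G y $ l $ m * xi y m)"
    unfolding xi_flat_def by (simp add: sum_distrib_left mult_ac)
  also have "\<dots> = (\<Sum>m\<in>UNIV. (\<Sum>l\<in>UNIV. ginv G y $ i $ l * G y $ l $ m) * xi y m)"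
    by (subst sum.swap) (simp add: sum_distrib_right)
  finally show ?thesis unfolding ginv_G[OF y] by (simp add: kdelta_sym[of i])
qed

lemma xi_G: "y \<in> U \<Longrightarrow> (\<Sum>l\<in>UNIV. xi y l * G y $ l $ j) = xi_flat y j"
  unfolding xi_flat_def by (intro sum.cong refl) (simp add: G_sym[of y _ j] mult.commute)

lemma hmet_inv_hmet:
  assumes y: "y \<in> U"
  shows "(\<Sum>l\<in>UNIV. hmet_inv y i l * hmet y l j) = kdelta i j"
proof -
  have "(\<Sum>l\<in>UNIV. hmet_inv y i l * hmet y l j) = (\<Sum>l\<in>UNIV. ginv G y $ i $ l * G y $ l $ j)
      + (\<Sum>l\<in>UNIV. ginv G y $ i $ l * xi_flat y l) * xi_flat y j
      - (1/2) * xi y i * (\<Sum>l\<in>UNIV. xi y l * G y $ l $ j)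
      - (1/2) * xi y i * (\<Sum>l\<in>UNIV. xi y l * xi_flat y l) * xi_flat y j"
    unfolding hmet_inv_def hmet_def
    by (simp add: ring_distribs sum.distrib sum_subtractf sum_distrib_left sum_distrib_right
      mult_ac)
  then show ?thesis unfolding ginv_G[OF y] ginv_xi_flat[OF y] xi_G[OF y] xi_unit[OF y] by simp
qed

lemma grad_alpha_hmet_inv:
  assumes y: "y \<in> U"
  shows "grad_alpha y k = (\<Sum>l\<in>UNIV. hmet_inv y k l * dalpha y l)"
proof -
  have "(\<Sum>l\<in>UNIV. hmet_inv y k l * dalpha y l)
      = (\<Sum>l\<in>UNIV. ginv G y $ k $ l * dalpha y l) - (1/2) * xi y k * (\<Sum>l\<in>UNIV. xi y l * dalpha y l)"
    unfolding hmet_inv_def by (simp add: ring_distribs sum_subtractf sum_distrib_left mult_ac)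
  then show ?thesis using xi_dalpha[OF y] by (simp add: grad_alpha_def gradc_def dalpha_def)
qed

lemma conformal_difference_at:
  "y \<in> U \<Longrightarrow> conformal_difference (hmet_inv y) (hmet y) (dalpha y) (grad_alpha y)"
  unfolding conformal_difference_def using hmet_sym hmet_inv_sym hmet_inv_hmet grad_alpha_hmet_inv
  by blast

lemma d_grad_alpha_hmet:
  assumes x: "x \<in> U"
  shows "(\<Sum>r\<in>UNIV. d_grad_alpha x \<mu> r * hmet x r s + grad_alpha x r * d_hmet x \<mu> r s)
    = hess_alpha x \<mu> s"
proof -
  have "pd \<mu> (\<lambda>y. \<Sum>r\<in>UNIV. grad_alpha y r * hmet y r s) x = pd \<mu> (\<lambda>y. dalpha y s) x"
    using conformal_difference.b_lower[OF conformal_difference_at]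
    by (intro pd_cong_open[OF U_open x])
  then show ?thesis
    unfolding hess_alpha_def d_hmet_def d_grad_alpha_def
    by (simp add: pd_sum pd_mult differentiable_mult grad_alpha_differentiable hmet_differentiable x
        add.commute)
qed

lemma conformal_ricci_at:
  "x \<in> U \<Longrightarrow> conformal_ricci (hmet_inv x) (hmet x) (dalpha x) (grad_alpha x)
     (christ G x) (d_hmet x) (hess_alpha x) (d_grad_alpha x)"
  unfolding conformal_ricci_def conformal_ricci_axioms_def
  using conformal_difference_at christ_G_sym d_grad_alpha_hmet pd_hmet unfolding d_hmet_def
  by blast

section \<open>Connection and curvature of the deformed metric\<close>

lemma deformed_metric_entry: "G\<alpha> y $ i $ j = \<alpha> y * hmet y i j"
  unfolding deformed_metric_def hmet_def xi_flat_vec[symmetric] by simp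

lemma ginv_deformed_metric:
  assumes y: "y \<in> U"
  shows "ginv G\<alpha> y $ i $ j = hmet_inv y i j / \<alpha> y"
proof -
  have "\<alpha> y \<noteq> 0" using alpha_pos y by force
  then have "(\<Sum>l\<in>UNIV. \<alpha> y * hmet y i l * (hmet_inv y l j / \<alpha> y)) = kdelta i j" for i j
    using hmet_inv_hmet[OF y, of j i] hmet_sym[OF y] hmet_inv_sym[OF y]
    by (simp add: kdelta_sym[of j] mult.commute)
  then have "G\<alpha> y ** (\<chi> i j. hmet_inv y i j / \<alpha> y) = mat 1"
    unfolding matrix_matrix_mult_def mat_def vec_eq_iff
    by (simp add: kdelta_def deformed_metric_entry)
  then show ?thesis unfolding ginv_def by (simp add: matrix_inv_eqI)
qed

lemma conf_diff_eq: "y \<in> U \<Longrightarrow> conf_diff y k i j = diff_tensor_at y k i j"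
  by (simp add: conf_diff_def conformal_difference.diff_tensor_def[OF conformal_difference_at])

lemma christ_deformed_metric:
  assumes y: "y \<in> U"
  shows "christ G\<alpha> y k i j = christ G y k i j + conf_diff y k i j"
proof (rule christ_eqI)
  have ap: "\<alpha> y > 0" using alpha_pos y by blast
  show "G\<alpha> y $ i $ j = G\<alpha> y $ j $ i" for i j
    unfolding deformed_metric_entry using hmet_sym[OF y] by simp
  show "(\<Sum>l\<in>UNIV. ginv G\<alpha> y $ k $ l * G\<alpha> y $ l $ j) = kdelta k j" for k j
    unfolding ginv_deformed_metric[OF y] deformed_metric_entry using hmet_inv_hmet[OF y, of k j] ap
    by simp
  show "christ G y k i j + conf_diff y k i j = christ G y k j i + conf_diff y k j i" for k i j
    using christ_G_sym[OF y] hmet_sym[OF y] unfolding conf_diff_def by (simp add: algebra_simps)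
  show "pd k (\<lambda>z. G\<alpha> z $ i $ j) y = (\<Sum>l\<in>UNIV. (christ G y l k i + conf_diff y l k i) * G\<alpha> y $ l $ j
      + (christ G y l k j + conf_diff y l k j) * G\<alpha> y $ i $ l)" for k i j
  proof -
    have "pd k (\<lambda>z. G\<alpha> z $ i $ j) y = \<alpha> y * pd k (\<lambda>z. hmet z i j) y + dalpha y k * hmet y i j"
      unfolding deformed_metric_entry dalpha_def
      using pd_mult[OF alpha_differentiable[OF y] hmet_differentiable[OF y]] by simp
    also have "\<dots> = \<alpha> y * (\<Sum>l\<in>UNIV. christ G y l k i * hmet y l j + christ G y l k j * hmet y i l)
        + \<alpha> y * (\<Sum>l\<in>UNIV. conf_diff y l k i * hmet y l j + conf_diff y l k j * hmet y i l)"
      unfolding pd_hmet[OF y] conf_diff_eq[OF y]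
        conformal_difference.diff_tensor_compat[OF conformal_difference_at[OF y]]
      using ap by simp
    finally show ?thesis
      unfolding deformed_metric_entry
        by (simp add: sum_distrib_left sum.distrib[symmetric] algebra_simps)
  qed
qed

lemma pd_conf_factor:
  assumes x: "x \<in> U"
  shows "pd \<mu> (\<lambda>y. 1 / (2 * \<alpha> y)) x = - 2 * (1 / (2 * \<alpha> x))^2 * dalpha x \<mu>"
proof -
  have "\<alpha> x > 0" using alpha_pos x by blast
  moreover have "pd \<mu> (\<lambda>y. 2 * \<alpha> y) x = 2 * dalpha x \<mu>"
    unfolding dalpha_def by (rule pd_cmult[OF alpha_differentiable[OF x]])
  ultimately show ?thesis
    using pd_divide[of "\<lambda>y. 1" x "\<lambda>y. 2 * \<alpha> y" \<mu>] alpha_differentiable[OF x]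
    by (simp add: power2_eq_square field_simps)
qed

lemma pd_conf_diff:
  assumes x: "x \<in> U"
  shows "pd \<mu> (\<lambda>y. conf_diff y r \<nu> s) x = diff_tensor_deriv_at x \<mu> r \<nu> s"
proof -
  define Q where "Q y = kdelta r s * dalpha y \<nu> + kdelta r \<nu> * dalpha y s
      - grad_alpha y r * hmet y \<nu> s"
    for y
  have dQ: "Q differentiable (at x)" unfolding Q_def
    by (intro differentiable_mult differentiable_add differentiable_diff differentiable_const
        dalpha_differentiable grad_alpha_differentiable hmet_differentiable x)
  have pQ: "pd \<mu> Q x = kdelta r s * hess_alpha x \<mu> \<nu> + kdelta r \<nu> * hess_alpha x \<mu> s
      - (grad_alpha x r * d_hmet x \<mu> \<nu> s + d_grad_alpha x \<mu> r * hmet x \<nu> s)"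
    unfolding Q_def hess_alpha_def d_hmet_def d_grad_alpha_def
    by (simp add: pd_add pd_diff pd_mult pd_cmult differentiable_mult dalpha_differentiable
        grad_alpha_differentiable hmet_differentiable x)
  have "pd \<mu> (\<lambda>y. conf_diff y r \<nu> s) x
      = 1 / (2 * \<alpha> x) * pd \<mu> Q x + pd \<mu> (\<lambda>y. 1 / (2 * \<alpha> y)) x * Q x"
    unfolding conf_diff_def Q_def[symmetric]
      by (rule pd_mult[OF conf_factor_differentiable[OF x] dQ])
  then show ?thesis
    unfolding conformal_ricci.diff_tensor_deriv_def[OF conformal_ricci_at[OF x]]
      pd_conf_factor[OF x]
      pQ
    by (simp add: Q_def[of x] algebra_simps)
qed

lemma riem_deformed_metric:
  assumes x: "x \<in> U"
  shows "riem G\<alpha> x r s \<mu> \<nu> = riem G x r s \<mu> \<nu>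
    + (diff_tensor_deriv_at x \<mu> r \<nu> s - diff_tensor_deriv_at x \<nu> r \<mu> s
      + (\<Sum>l\<in>UNIV. christ G x r \<mu> l * diff_tensor_at x l \<nu> s + diff_tensor_at x r \<mu> l * christ G x
        l \<nu> s
          + diff_tensor_at x r \<mu> l * diff_tensor_at x l \<nu> s - christ G x r \<nu> l * diff_tensor_at x
            l \<mu> s
          - diff_tensor_at x r \<nu> l * christ G x l \<mu> s - diff_tensor_at x r \<nu> l * diff_tensor_at x
            l \<mu> s))"
proof -
  have "pd \<mu> (\<lambda>y. christ G\<alpha> y r \<nu> s) x
      = pd \<mu> (\<lambda>y. christ G y r \<nu> s) x + diff_tensor_deriv_at x \<mu> r \<nu> s" for \<mu> r \<nu> s
  proof -
    have "pd \<mu> (\<lambda>y. christ G\<alpha> y r \<nu> s) x = pd \<mu> (\<lambda>y. christ G y r \<nu> s + conf_diff y r \<nu> s) x"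
      by (rule pd_cong_open[OF U_open x]) (rule christ_deformed_metric)
    then show ?thesis
      by (simp add: pd_add christ_differentiable conf_diff_differentiable pd_conf_diff x)
  qed
  moreover have "christ G\<alpha> x k i j = christ G x k i j + diff_tensor_at x k i j" for k i j
    using christ_deformed_metric[OF x] conf_diff_eq[OF x] by simp
  ultimately show ?thesis
    unfolding riem_def by (simp add: algebra_simps sum.distrib sum_subtractf)
qed

lemma ricci_deformed_metric:
  "x \<in> U \<Longrightarrow> ricci G\<alpha> x s \<nu> = ricci G x s \<nu> + ricci_diff_at x s \<nu>"
  unfolding ricci_def conformal_ricci.ricci_diff_def[OF conformal_ricci_at]
  by (simp add: riem_deformed_metric sum.distrib sum_subtractf)

lemma scal_deformed_metric_htr:
  "x \<in> U \<Longrightarrow> scal G\<alpha> x = ((\<Sum>s\<in>UNIV. \<Sum>\<nu>\<in>UNIV. hmet_inv x s \<nu> * ricci G x s \<nu>)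
     + conformal_ricci.htr (hmet_inv x) (ricci_diff_at x)) / \<alpha> x"
  unfolding scal_def conformal_ricci.htr_def[OF conformal_ricci_at] ginv_deformed_metric
    ricci_deformed_metric
  by (simp add: ring_distribs sum.distrib sum_distrib_left add_divide_distrib sum_divide_distrib
    mult_ac)

section \<open>Contraction with the inverse of the deformed metric\<close>

lemma pd_xi_differentiable:
  assumes x: "x \<in> U"
  shows "pd \<nu> (\<lambda>z. xi z r) differentiable (at x)"
proof -
  have "(\<lambda>y. - (\<Sum>l\<in>UNIV. christ G y r \<nu> l * xi y l)) differentiable (at x)"
    by (intro differentiable_minus differentiable_sum differentiable_mult christ_differentiable
        xi_differentiable x ballI) simp_all
  then show ?thesis by (rule differentiable_cong_open[OF _ U_open x]) (simp add: pd_xi)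
qed

lemma pd_pd_xi:
  assumes x: "x \<in> U"
  shows "pd \<mu> (pd \<nu> (\<lambda>z. xi z r)) x
    = (\<Sum>l\<in>UNIV. \<Sum>p\<in>UNIV. christ G x r \<nu> l * christ G x l \<mu> p * xi x p)
      - (\<Sum>l\<in>UNIV. pd \<mu> (\<lambda>y. christ G y r \<nu> l) x * xi x l)"
proof -
  have "pd \<mu> (pd \<nu> (\<lambda>z. xi z r)) x = pd \<mu> (\<lambda>y. - (\<Sum>l\<in>UNIV. christ G y r \<nu> l * xi y l)) x"
    by (rule pd_cong_open[OF U_open x]) (rule pd_xi)
  also have "\<dots> = - (\<Sum>l\<in>UNIV. christ G x r \<nu> l * pd \<mu> (\<lambda>y. xi y l) x
      + pd \<mu> (\<lambda>y. christ G y r \<nu> l) x * xi x l)"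
    by (simp add: pd_minus pd_sum pd_mult differentiable_mult christ_differentiable
        xi_differentiable x)
  finally show ?thesis unfolding pd_xi[OF x]
    by (simp add: sum.distrib sum_subtractf sum_negf sum_distrib_left mult_ac)
qed

text \<open>A parallel vector field is annihilated by the curvature; in coordinates this is the
  symmetry of the second partial derivatives of \<open>\<xi>\<close>.\<close>
lemma riem_xi:
  assumes x: "x \<in> U"
  shows "(\<Sum>s\<in>UNIV. riem G x r s \<mu> \<nu> * xi x s) = 0"
proof -
  have "pd \<mu> (pd \<nu> (\<lambda>z. xi z r)) x = pd \<nu> (pd \<mu> (\<lambda>z. xi z r)) x"
    by (rule pd_commute[OF U_open x xi_differentiable pd_xi_differentiable[OF x]
          pd_xi_differentiable[OF x]])
  moreover have "(\<Sum>s\<in>UNIV. riem G x r s \<mu> \<nu> * xi x s)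
      = (\<Sum>s\<in>UNIV. pd \<mu> (\<lambda>y. christ G y r \<nu> s) x * xi x s)
        - (\<Sum>s\<in>UNIV. pd \<nu> (\<lambda>y. christ G y r \<mu> s) x * xi x s)
        + (\<Sum>s\<in>UNIV. \<Sum>l\<in>UNIV. christ G x r \<mu> l * christ G x l \<nu> s * xi x s)
        - (\<Sum>s\<in>UNIV. \<Sum>l\<in>UNIV. christ G x r \<nu> l * christ G x l \<mu> s * xi x s)"
    unfolding riem_def
    by (simp add: algebra_simps sum.distrib sum_subtractf sum_distrib_right sum_distrib_left)
  moreover have "(\<Sum>s\<in>UNIV. \<Sum>l\<in>UNIV. christ G x r \<mu> l * christ G x l \<nu> s * xi x s)
      = (\<Sum>l\<in>UNIV. \<Sum>p\<in>UNIV. christ G x r \<mu> l * christ G x l \<nu> p * xi x p)" for \<mu> \<nu>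
    by (rule sum.swap)
  ultimately show ?thesis unfolding pd_pd_xi[OF x] by simp
qed

lemma ricci_xi_xi:
  assumes x: "x \<in> U"
  shows "(\<Sum>s\<in>UNIV. \<Sum>\<nu>\<in>UNIV. xi x s * xi x \<nu> * ricci G x s \<nu>) = 0"
proof -
  have "(\<Sum>s\<in>UNIV. \<Sum>\<nu>\<in>UNIV. xi x s * xi x \<nu> * ricci G x s \<nu>)
      = (\<Sum>s\<in>UNIV. \<Sum>\<nu>\<in>UNIV. \<Sum>r\<in>UNIV. xi x \<nu> * (riem G x r s r \<nu> * xi x s))"
    unfolding ricci_def by (simp add: sum_distrib_left mult_ac)
  also have "\<dots> = (\<Sum>\<nu>\<in>UNIV. \<Sum>s\<in>UNIV. \<Sum>r\<in>UNIV. xi x \<nu> * (riem G x r s r \<nu> * xi x s))"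
    by (rule sum.swap)
  also have "\<dots> = (\<Sum>\<nu>\<in>UNIV. \<Sum>r\<in>UNIV. \<Sum>s\<in>UNIV. xi x \<nu> * (riem G x r s r \<nu> * xi x s))"
    by (rule sum.cong[OF refl], rule sum.swap)
  finally show ?thesis by (simp add: sum_distrib_left[symmetric] riem_xi[OF x])
qed

lemma hmet_inv_ricci:
  assumes x: "x \<in> U"
  shows "(\<Sum>s\<in>UNIV. \<Sum>\<nu>\<in>UNIV. hmet_inv x s \<nu> * ricci G x s \<nu>) = scal G x"
proof -
  have "(\<Sum>s\<in>UNIV. \<Sum>\<nu>\<in>UNIV. hmet_inv x s \<nu> * ricci G x s \<nu>)
      = scal G x - (1/2) * (\<Sum>s\<in>UNIV. \<Sum>\<nu>\<in>UNIV. xi x s * xi x \<nu> * ricci G x s \<nu>)"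
    unfolding hmet_inv_def scal_def by (simp add: algebra_simps sum_subtractf sum_distrib_left)
  then show ?thesis unfolding ricci_xi_xi[OF x] by simp
qed

lemma pd_ginv:
  assumes x: "x \<in> U"
  shows "pd k (\<lambda>y. ginv G y $ i $ m) x
    = - (\<Sum>l\<in>UNIV. christ G x m k l * ginv G x $ i $ l + christ G x i k l * ginv G x $ l $ m)"
proof -
  define g where "g = ginv G x"
  have "pd k (\<lambda>y. ginv G y $ i $ m) x
      = - (\<Sum>j\<in>UNIV. \<Sum>l\<in>UNIV. g $ i $ l * pd k (\<lambda>y. G y $ l $ j) x * g $ j $ m)"
    unfolding ginv_def g_def
    using pd_matrix_inv[OF U_open x] G_invertible G_differentiable[OF x] by blast
  also have "(\<Sum>j\<in>UNIV. \<Sum>l\<in>UNIV. g $ i $ l * pd k (\<lambda>y. G y $ l $ j) x * g $ j $ m)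
      = (\<Sum>j\<in>UNIV. \<Sum>l\<in>UNIV. \<Sum>p\<in>UNIV. g $ i $ l * christ G x p k l * (G x $ p $ j * g $ j $ m))
      + (\<Sum>j\<in>UNIV. \<Sum>l\<in>UNIV. \<Sum>p\<in>UNIV. (g $ i $ l * G x $ l $ p) * christ G x p k j * g $ j $ m)"
    unfolding pd_G_christ[OF x]
    by (simp add: sum.distrib sum_distrib_left sum_distrib_right ring_distribs mult_ac)
  also have "(\<Sum>j\<in>UNIV. \<Sum>l\<in>UNIV. \<Sum>p\<in>UNIV. g $ i $ l * christ G x p k l * (G x $ p $ j * g $ j $ m))
      = (\<Sum>l\<in>UNIV. \<Sum>p\<in>UNIV. g $ i $ l * christ G x p k l * kdelta p m)"
    unfolding g_def G_ginv[OF x, symmetric] sum_distrib_left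
    by (subst sum.swap) (rule sum.cong[OF refl], rule sum.swap)
  also have "(\<Sum>j\<in>UNIV. \<Sum>l\<in>UNIV. \<Sum>p\<in>UNIV. (g $ i $ l * G x $ l $ p) * christ G x p k j * g $ j $ m)
      = (\<Sum>j\<in>UNIV. \<Sum>p\<in>UNIV. kdelta i p * (christ G x p k j * g $ j $ m))"
    unfolding g_def ginv_G[OF x, symmetric] sum_distrib_right
    by (rule sum.cong[OF refl], subst sum.swap) (simp add: mult_ac)
  finally show ?thesis unfolding g_def by (simp add: sum.distrib mult_ac)
qed

lemma laplacian_christ_tr:
  "laplacian G \<alpha> x
     = (\<Sum>r\<in>UNIV. d_grad_alpha x r r) + (\<Sum>l\<in>UNIV. grad_alpha x l * (\<Sum>r\<in>UNIV. christ G x r r l))"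
proof -
  have "(\<Sum>i\<in>UNIV. \<Sum>k\<in>UNIV. christ G x i i k * grad_alpha x k)
      = (\<Sum>k\<in>UNIV. \<Sum>i\<in>UNIV. christ G x i i k * grad_alpha x k)"
    by (rule sum.swap)
  then show ?thesis unfolding laplacian_def d_grad_alpha_def grad_alpha_def[symmetric]
    by (simp add: sum.distrib sum_distrib_left mult_ac)
qed

lemma d_grad_alpha_eq:
  assumes x: "x \<in> U"
  shows "d_grad_alpha x \<mu> k = (\<Sum>j\<in>UNIV. ginv G x $ k $ j * hess_alpha x \<mu> j)
    - (\<Sum>j\<in>UNIV. (\<Sum>l\<in>UNIV. christ G x j \<mu> l * ginv G x $ k $ l + christ G x k \<mu> l * ginv G x $ l $ j)
        * dalpha x j)"
proof -
  have "d_grad_alpha x \<mu> k = (\<Sum>j\<in>UNIV. ginv G x $ k $ j * hess_alpha x \<mu> j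
      + pd \<mu> (\<lambda>y. ginv G y $ k $ j) x * dalpha x j)"
    unfolding d_grad_alpha_def grad_alpha_def gradc_def dalpha_def[symmetric] hess_alpha_def
    by (simp add: pd_sum pd_mult differentiable_mult ginv_differentiable dalpha_differentiable x)
  also have "\<dots> = (\<Sum>j\<in>UNIV. ginv G x $ k $ j * hess_alpha x \<mu> j
      - (\<Sum>l\<in>UNIV. christ G x j \<mu> l * ginv G x $ k $ l + christ G x k \<mu> l * ginv G x $ l $ j)
        * dalpha x j)"
    unfolding pd_ginv[OF x] by simp
  finally show ?thesis by (simp only: sum_subtractf)
qed

lemma laplacian_ginv:
  assumes x: "x \<in> U"
  shows "laplacian G \<alpha> x = (\<Sum>s\<in>UNIV. \<Sum>\<nu>\<in>UNIV. ginv G x $ s $ \<nu> * hess_alpha x s \<nu>)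
    - (\<Sum>l\<in>UNIV. dalpha x l * (\<Sum>s\<in>UNIV. \<Sum>\<nu>\<in>UNIV. ginv G x $ s $ \<nu> * christ G x l \<nu> s))"
proof -
  define g where "g = ginv G x"
  have "(\<Sum>r\<in>UNIV. \<Sum>j\<in>UNIV. \<Sum>l\<in>UNIV. christ G x r r l * g $ l $ j * dalpha x j)
      = (\<Sum>r\<in>UNIV. \<Sum>l\<in>UNIV. christ G x r r l * (\<Sum>j\<in>UNIV. g $ l $ j * dalpha x j))"
    by (rule sum.cong[OF refl], subst sum.swap) (simp add: sum_distrib_left mult_ac)
  also have "\<dots> = (\<Sum>l\<in>UNIV. grad_alpha x l * (\<Sum>r\<in>UNIV. christ G x r r l))"
    unfolding grad_alpha_def gradc_def dalpha_def[symmetric] g_def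
    by (subst sum.swap) (simp add: sum_distrib_right mult.commute)
  finally have trace_term: "(\<Sum>r\<in>UNIV. \<Sum>j\<in>UNIV. \<Sum>l\<in>UNIV. christ G x r r l * g $ l $ j * dalpha x j)
      = (\<Sum>l\<in>UNIV. grad_alpha x l * (\<Sum>r\<in>UNIV. christ G x r r l))" .
  have "(\<Sum>r\<in>UNIV. \<Sum>j\<in>UNIV. \<Sum>l\<in>UNIV. christ G x j r l * g $ r $ l * dalpha x j)
      = (\<Sum>j\<in>UNIV. \<Sum>r\<in>UNIV. \<Sum>l\<in>UNIV. christ G x j r l * g $ r $ l * dalpha x j)"
    by (rule sum.swap)
  also have "\<dots> = (\<Sum>l\<in>UNIV. dalpha x l * (\<Sum>s\<in>UNIV. \<Sum>\<nu>\<in>UNIV. g $ s $ \<nu> * christ G x l \<nu> s))"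
    using christ_G_sym[OF x] by (simp add: sum_distrib_left mult_ac)
  finally have christ_term: "(\<Sum>r\<in>UNIV. \<Sum>j\<in>UNIV. \<Sum>l\<in>UNIV. christ G x j r l * g $ r $ l * dalpha x j)
      = (\<Sum>l\<in>UNIV. dalpha x l * (\<Sum>s\<in>UNIV. \<Sum>\<nu>\<in>UNIV. g $ s $ \<nu> * christ G x l \<nu> s))" .
  show ?thesis
    unfolding laplacian_christ_tr d_grad_alpha_eq[OF x] g_def[symmetric]
    using trace_term christ_term
      by (simp add: sum.distrib sum_subtractf sum_distrib_right ring_distribs)
qed

lemma xi_xi_hess_alpha:
  assumes x: "x \<in> U"
  shows "(\<Sum>s\<in>UNIV. \<Sum>\<nu>\<in>UNIV. xi x s * xi x \<nu> * hess_alpha x s \<nu>)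
    = (\<Sum>l\<in>UNIV. dalpha x l * (\<Sum>s\<in>UNIV. \<Sum>\<nu>\<in>UNIV. xi x s * xi x \<nu> * christ G x l \<nu> s))"
proof -
  have e: "(\<Sum>\<nu>\<in>UNIV. xi x \<nu> * hess_alpha x s \<nu>)
      = (\<Sum>\<nu>\<in>UNIV. \<Sum>l\<in>UNIV. christ G x \<nu> s l * xi x l * dalpha x \<nu>)" for s
  proof -
    have "pd s (\<lambda>y. \<Sum>\<nu>\<in>UNIV. xi y \<nu> * dalpha y \<nu>) x = pd s (\<lambda>y. 0) x"
      by (rule pd_cong_open[OF U_open x]) (rule xi_dalpha)
    then have "(\<Sum>\<nu>\<in>UNIV. xi x \<nu> * hess_alpha x s \<nu> + pd s (\<lambda>y. xi y \<nu>) x * dalpha x \<nu>) = 0"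
      unfolding hess_alpha_def
      by (simp add: pd_sum pd_mult differentiable_mult xi_differentiable dalpha_differentiable x)
    then show ?thesis unfolding pd_xi[OF x] by (simp add: sum_distrib_right sum_subtractf)
  qed
  have "(\<Sum>s\<in>UNIV. \<Sum>\<nu>\<in>UNIV. xi x s * xi x \<nu> * hess_alpha x s \<nu>)
      = (\<Sum>s\<in>UNIV. xi x s * (\<Sum>\<nu>\<in>UNIV. xi x \<nu> * hess_alpha x s \<nu>))"
    by (simp add: sum_distrib_left mult_ac)
  also have "\<dots> = (\<Sum>s\<in>UNIV. \<Sum>\<nu>\<in>UNIV. \<Sum>l\<in>UNIV. dalpha x \<nu> * (xi x s * xi x l * christ G x \<nu> s l))"
    unfolding e by (simp add: sum_distrib_left mult_ac)
  also have "\<dots> = (\<Sum>\<nu>\<in>UNIV. \<Sum>s\<in>UNIV. \<Sum>l\<in>UNIV. dalpha x \<nu> * (xi x s * xi x l * christ G x \<nu> s l))"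
    by (rule sum.swap)
  also have "\<dots> = (\<Sum>l\<in>UNIV. dalpha x l * (\<Sum>s\<in>UNIV. \<Sum>\<nu>\<in>UNIV. xi x s * xi x \<nu> * christ G x l \<nu> s))"
    unfolding sum_distrib_left using christ_G_sym[OF x] by simp
  finally show ?thesis .
qed

lemma laplacian_htr_christ:
  assumes x: "x \<in> U"
  shows "laplacian G \<alpha> x = conformal_ricci.htr (hmet_inv x) (hess_alpha x)
    - (\<Sum>l\<in>UNIV. dalpha x l * conformal_ricci.htr_christ (hmet_inv x) (christ G x) l)"
proof -
  define xi_christ where
    "xi_christ l = (\<Sum>s\<in>UNIV. \<Sum>\<nu>\<in>UNIV. xi x s * xi x \<nu> * christ G x l \<nu> s)" for l
  have htr_hess: "conformal_ricci.htr (hmet_inv x) (hess_alpha x)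
      = (\<Sum>s\<in>UNIV. \<Sum>\<nu>\<in>UNIV. ginv G x $ s $ \<nu> * hess_alpha x s \<nu>)
        - (1/2) * (\<Sum>l\<in>UNIV. dalpha x l * xi_christ l)"
    unfolding conformal_ricci.htr_def[OF conformal_ricci_at[OF x]] hmet_inv_def xi_christ_def
      xi_xi_hess_alpha[OF x, symmetric]
    by (simp add: algebra_simps sum_subtractf sum_distrib_left)
  have htr_christ: "conformal_ricci.htr_christ (hmet_inv x) (christ G x) l
      = (\<Sum>s\<in>UNIV. \<Sum>\<nu>\<in>UNIV. ginv G x $ s $ \<nu> * christ G x l \<nu> s) - (1/2) * xi_christ l" for l
    unfolding conformal_ricci.htr_christ_def[OF conformal_ricci_at[OF x]]
      conformal_ricci.htr_def[OF conformal_ricci_at[OF x]] hmet_inv_def xi_christ_def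
    by (simp add: algebra_simps sum_subtractf sum_distrib_left)
  show ?thesis
    unfolding laplacian_ginv[OF x] htr_hess htr_christ
    by (simp add: algebra_simps sum_subtractf sum_distrib_left)
qed

lemma grad_normsq_eq:
  assumes x: "x \<in> U"
  shows "grad_normsq G \<alpha> x = (\<Sum>l\<in>UNIV. grad_alpha x l * dalpha x l)"
proof -
  have "(\<Sum>j\<in>UNIV. G x $ i $ j * grad_alpha x j) = dalpha x i" for i
  proof -
    have "(\<Sum>j\<in>UNIV. G x $ i $ j * grad_alpha x j)
        = (\<Sum>j\<in>UNIV. \<Sum>k\<in>UNIV. G x $ i $ j * ginv G x $ j $ k * dalpha x k)"
      unfolding grad_alpha_def gradc_def dalpha_def by (simp add: sum_distrib_left mult_ac)
    also have "\<dots> = (\<Sum>k\<in>UNIV. (\<Sum>j\<in>UNIV. G x $ i $ j * ginv G x $ j $ k) * dalpha x k)"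
      by (subst sum.swap) (simp add: sum_distrib_right)
    finally show ?thesis unfolding G_ginv[OF x] by simp
  qed
  moreover have "grad_normsq G \<alpha> x
      = (\<Sum>i\<in>UNIV. grad_alpha x i * (\<Sum>j\<in>UNIV. G x $ i $ j * grad_alpha x j))"
    unfolding grad_normsq_def grad_alpha_def by (simp add: sum_distrib_left mult_ac)
  ultimately show ?thesis by simp
qed


lemma scal_deformed_metric:
  assumes x: "x \<in> U"
  shows "scal G\<alpha> x = scal G x / \<alpha> x - (real CARD('n) - 1) / (\<alpha> x)^2 * laplacian G \<alpha> x
    - (real CARD('n) - 1) * (real CARD('n) - 6) / (4 * (\<alpha> x)^3) * grad_normsq G \<alpha> x"
proof -
  interpret R: conformal_ricci "hmet_inv x" "hmet x" "dalpha x" "grad_alpha x" "1 / (2 * \<alpha> x)"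
    "christ G x" "d_hmet x" "hess_alpha x" "d_grad_alpha x"
    by (rule conformal_ricci_at[OF x])
  have "R.div_b + (\<Sum>l\<in>UNIV. grad_alpha x l * R.christ_tr l) = laplacian G \<alpha> x"
    unfolding laplacian_christ_tr R.div_b_def R.christ_tr_def ..
  moreover have "R.htr (hess_alpha x) - (\<Sum>l\<in>UNIV. dalpha x l * R.htr_christ l) = laplacian G \<alpha> x"
    using laplacian_htr_christ[OF x] by simp
  moreover have "R.grad_sq = grad_normsq G \<alpha> x"
    unfolding R.grad_sq_def grad_normsq_eq[OF x] ..
  ultimately have ricci_diff: "R.htr R.ricci_diff
      = - (real CARD('n) - 1) * (real CARD('n) - 6) * (1 / (2 * \<alpha> x))^2 * grad_normsq G \<alpha> x
        + (2 - real CARD('n)) * (1 / (2 * \<alpha> x)) * laplacian G \<alpha> x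
        - real CARD('n) * (1 / (2 * \<alpha> x)) * laplacian G \<alpha> x"
    using R.htr_ricci_diff by (simp only:)
  have "\<alpha> x > 0" using alpha_pos x by blast
  then show ?thesis
    unfolding scal_deformed_metric_htr[OF x] hmet_inv_ricci[OF x] ricci_diff
    by (simp add: field_simps power2_eq_square power3_eq_cube)
qed

end

theorem theorem3p10:
  fixes U :: "(real^'n::finite) set"
    and F G :: "real^'n \<Rightarrow> real^'n^'n"
    and V :: "real^'n \<Rightarrow> real^'n"
    and \<alpha> :: "real^'n \<Rightarrow> real"
    and m :: nat
  assumes "open U"
    and "CARD('n) = 2 * m"
    and "para_kaehler_norden U F G"
    and "unit_parallel U G V"
    and "smooth_on U \<alpha>"
    and "\<forall>x\<in>U. \<alpha> x > 0"
    and "\<forall>x\<in>U. (\<Sum>i\<in>UNIV. (F x *v V x) $ i * pd i \<alpha> x) = 0"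
  shows "\<forall>x\<in>U. scal (deformed_metric G F V \<alpha>) x =
           scal G x / \<alpha> x
           - (2 * real m - 1) / (\<alpha> x)^2 * laplacian G \<alpha> x
           - (2 * real m - 1) * (real m - 3) / (2 * (\<alpha> x)^3) * grad_normsq G \<alpha> x"
proof
  fix x assume x: "x \<in> U"
  interpret pkn_deformation U F G V \<alpha>
    using assms unfolding pkn_deformation_def by blast
  have "\<alpha> x > 0" using assms(6) x by blast
  then have "(2 * real m - 1) * (2 * real m - 6) / (4 * (\<alpha> x)^3)
      = (2 * real m - 1) * (real m - 3) / (2 * (\<alpha> x)^3)"
    by (simp add: field_simps)
  then show "scal (deformed_metric G F V \<alpha>) x = scal G x / \<alpha> x
      - (2 * real m - 1) / (\<alpha> x)^2 * laplacian G \<alpha> x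
      - (2 * real m - 1) * (real m - 3) / (2 * (\<alpha> x)^3) * grad_normsq G \<alpha> x"
    using scal_deformed_metric[OF x] assms(2) by simp
qed

end
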